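(* Let $p$ be a prime with $p\equiv 19\pmod{24}$ and $G=PGL_2(p)$. Let $k>10$ be a divisor of $p-1$ with $(p-1)/k$ odd. Let $\mathbb{T}_k$ be the set of triples $(a_1,b_1,c_1)\in G^3$ with $a_1b_1c_1=1$ and $a_1,b_1,c_1$ of orders $2,3,k$ respectively. For a conjugacy class $\mathcal{C}$ of elements of order $k$ in $G$, let $\mathbb{T}_k(\mathcal{C})=\{(a_1,b_1,c_1)\in\mathbb{T}_k: c_1\in\mathcal{C}\}$. Then for each conjugacy class $\mathcal{C}$ of elements of order $k$ in $G$, $|\mathbb{T}_k(\mathcal{C})|=p(p^2-1)$.
   Context: $PGL_2(p)=GL_2(\mathbb{F}_p)/\{\lambda I:\lambda\in\mathbb{F}_p^*\}$. *)

theory Defs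
  imports "HOL-Computational_Algebra.Primes" "HOL-Algebra.Multiplicative_Group"
begin

text \<open>2x2 matrices over F_p, represented as quadruples (a,b,c,d) of integers in {0..<p},
  standing for the matrix [[a,b],[c,d]].\<close>
type_synonym mat2 = "int \<times> int \<times> int \<times> int"

definition mmul :: "nat \<Rightarrow> mat2 \<Rightarrow> mat2 \<Rightarrow> mat2" where
  "mmul p M N = (case M of (a,b,c,d) \<Rightarrow> case N of (e,f,g,h) \<Rightarrow>
     ((a*e+b*g) mod int p, (a*f+b*h) mod int p, (c*e+d*g) mod int p, (c*f+d*h) mod int p))"

definition msmul :: "nat \<Rightarrow> int \<Rightarrow> mat2 \<Rightarrow> mat2" where
  "msmul p l M = (case M of (a,b,c,d) \<Rightarrow>
     ((l*a) mod int p, (l*b) mod int p, (l*c) mod int p, (l*d) mod int p))"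

definition GL2 :: "nat \<Rightarrow> mat2 set" where
  "GL2 p = {(a,b,c,d). a \<in> {0..<int p} \<and> b \<in> {0..<int p} \<and> c \<in> {0..<int p} \<and> d \<in> {0..<int p}
             \<and> (a*d - b*c) mod int p \<noteq> 0}"

definition sclass :: "nat \<Rightarrow> mat2 \<Rightarrow> mat2 set" where
  "sclass p M = {msmul p l M | l. l \<in> {1..<int p}}"

text \<open>PGL_2(p) = GL_2(F_p)/{scalars}; elements are scalar classes, product of classes
  is the set of all products (which is again a class).\<close>
definition PGL2 :: "nat \<Rightarrow> mat2 set monoid" where
  "PGL2 p = \<lparr> carrier = sclass p ` GL2 p,
              mult = (\<lambda>X Y. {mmul p A B | A B. A \<in> X \<and> B \<in> Y}),
              one = sclass p (1,0,0,1) \<rparr>"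

definition conj_class :: "('a, 'b) monoid_scheme \<Rightarrow> 'a \<Rightarrow> 'a set" where
  "conj_class G x = {g \<otimes>\<^bsub>G\<^esub> x \<otimes>\<^bsub>G\<^esub> inv\<^bsub>G\<^esub> g | g. g \<in> carrier G}"

definition triples :: "('a, 'b) monoid_scheme \<Rightarrow> nat \<Rightarrow> ('a \<times> 'a \<times> 'a) set" where
  "triples G k = {(a,b,c). a \<in> carrier G \<and> b \<in> carrier G \<and> c \<in> carrier G
      \<and> a \<otimes>\<^bsub>G\<^esub> b \<otimes>\<^bsub>G\<^esub> c = \<one>\<^bsub>G\<^esub>
      \<and> group.ord G a = 2 \<and> group.ord G b = 3 \<and> group.ord G c = k}"

end

theory Submission
  imports Defs "HOL-Algebra.Group_Action" "HOL-Number_Theory.Euler_Criterion"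
    "HOL-Number_Theory.Modular_Inverse"
begin

text \<open>An element \<open>c\<close> of order \<open>k\<close> in \<open>PGL\<^sub>2(p)\<close> is the class of a matrix \<open>A\<close>, and \<open>c\<^sup>n = 1\<close> exactly
  when \<open>p\<close> divides the Lucas number \<open>U\<^sub>n(tr A, det A)\<close>. By the Frobenius in \<open>\<int>[\<surd>\<delta>]\<close>,
  \<open>U\<^sub>p \<equiv> 0\<close> if the discriminant of \<open>A\<close> vanishes mod \<open>p\<close> and \<open>U\<^sub>p\<^sub>+\<^sub>1 \<equiv> 0\<close> if it is a non-residue;
  as \<open>k > 2\<close> divides \<open>p - 1\<close>, neither happens, so \<open>A\<close> has distinct eigenvalues in \<open>\<bbbF>\<^sub>p\<close> and \<open>c\<close>
  is conjugate to \<open>D = diag(\<mu>, 1)\<close>.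

  A triple \<open>(a, b, c')\<close> with \<open>c' \<in> \<C>\<close> is determined by \<open>(c', a)\<close>, so
  \<open>|\<T>\<^sub>k(\<C>)| = |\<C>| \<cdot> #{a. ord a = 2, ord (Da) = 3}\<close>. The centraliser of \<open>D\<close> consists of the
  \<open>p - 1\<close> diagonal classes, whence \<open>|\<C>| = p(p\<^sup>2 - 1)/(p - 1)\<close>; and the involutions \<open>a\<close> with \<open>Da\<close>
  of order 3 are the classes of the matrices \<open>[[x, y], [z, -x]]\<close> with \<open>yz \<equiv> r x\<^sup>2\<close> for a fixed unit
  \<open>r\<close>, of which there are \<open>p - 1\<close>.\<close>

section \<open>Counting triples in a finite group\<close>

definition twothree_factors :: "('a, 'b) monoid_scheme \<Rightarrow> 'a \<Rightarrow> 'a set" where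
  "twothree_factors G c =
     {a \<in> carrier G. group.ord G a = 2 \<and> group.ord G (c \<otimes>\<^bsub>G\<^esub> a) = 3}"

context group
begin

lemma inv_mult_cancel_left [simp]: "x \<in> carrier G \<Longrightarrow> y \<in> carrier G \<Longrightarrow> inv x \<otimes> (x \<otimes> y) = y"
  by (simp flip: m_assoc)

lemma mult_inv_cancel_left [simp]: "x \<in> carrier G \<Longrightarrow> y \<in> carrier G \<Longrightarrow> x \<otimes> (inv x \<otimes> y) = y"
  by (simp flip: m_assoc)

lemma conj_pow:
  assumes "g \<in> carrier G" "x \<in> carrier G"
  shows "(g \<otimes> x \<otimes> inv g) [^] (n::nat) = g \<otimes> x [^] n \<otimes> inv g"
  by (induction n) (use assms in \<open>simp_all add: m_assoc\<close>)

lemma conj_eq_iff_commute: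
  assumes "g \<in> carrier G" "x \<in> carrier G"
  shows "g \<otimes> x \<otimes> inv g = x \<longleftrightarrow> g \<otimes> x = x \<otimes> g"
  using right_cancel[of g "g \<otimes> x \<otimes> inv g" x] assms by (simp add: m_assoc)

lemma ord_eq_prime_iff:
  assumes "x \<in> carrier G" "prime (q::nat)"
  shows "ord x = q \<longleftrightarrow> x [^] q = \<one> \<and> x \<noteq> \<one>"
proof
  assume "ord x = q"
  then show "x [^] q = \<one> \<and> x \<noteq> \<one>"
    using assms pow_ord_eq_1 ord_eq_1 by (metis not_prime_1)
next
  assume "x [^] q = \<one> \<and> x \<noteq> \<one>"
  moreover from this have "ord x dvd q" using assms pow_eq_id by blast
  ultimately show "ord x = q"
    using assms ord_eq_1 by (auto simp: prime_nat_iff)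
qed

lemma ord_conj:
  assumes "g \<in> carrier G" "x \<in> carrier G"
  shows "ord (g \<otimes> x \<otimes> inv g) = ord x"
proof -
  have "(g \<otimes> x \<otimes> inv g) [^] n = \<one> \<longleftrightarrow> x [^] n = \<one>" for n :: nat
    using assms by (simp add: conj_pow) (metis conjugation_is_inj inv_closed nat_pow_closed one_closed r_inv r_one)
  then show ?thesis
    using assms ord_unique[of "g \<otimes> x \<otimes> inv g"] pow_eq_id[of x] by simp
qed

lemma conj_class_conj:
  assumes "g \<in> carrier G" "y \<in> carrier G"
  shows "conj_class G (g \<otimes> y \<otimes> inv g) = conj_class G y"
proof (intro equalityI subsetI)
  fix z assume "z \<in> conj_class G (g \<otimes> y \<otimes> inv g)"
  then obtain h where h: "h \<in> carrier G" "z = h \<otimes> (g \<otimes> y \<otimes> inv g) \<otimes> inv h"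
    unfolding conj_class_def by blast
  then have "z = (h \<otimes> g) \<otimes> y \<otimes> inv (h \<otimes> g)"
    using assms by (simp add: m_assoc inv_mult_group)
  then show "z \<in> conj_class G y" unfolding conj_class_def using h assms by blast
next
  fix z assume "z \<in> conj_class G y"
  then obtain h where h: "h \<in> carrier G" "z = h \<otimes> y \<otimes> inv h" unfolding conj_class_def by blast
  then have "z = (h \<otimes> inv g) \<otimes> (g \<otimes> y \<otimes> inv g) \<otimes> inv (h \<otimes> inv g)"
    using assms by (simp add: m_assoc inv_mult_group)
  then show "z \<in> conj_class G (g \<otimes> y \<otimes> inv g)" unfolding conj_class_def using h assms by blast
qed

lemma card_conj_class_mult_centralizer:
  assumes "x \<in> carrier G"
  shows "card (conj_class G x) * card {g \<in> carrier G. g \<otimes> x \<otimes> inv g = x} = order G"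
proof -
  let ?\<phi> = "\<lambda>g. \<lambda>h\<in>carrier G. g \<otimes> h \<otimes> inv g"
  have "orbit G ?\<phi> x = conj_class G x"
    unfolding orbit_def conj_class_def using assms by auto
  moreover have "stabilizer G ?\<phi> x = {g \<in> carrier G. g \<otimes> x \<otimes> inv g = x}"
    unfolding stabilizer_def using assms by auto
  ultimately show ?thesis
    using group_action.orbit_stabilizer_theorem[OF action_by_conjugation assms] by simp
qed

lemma card_twothree_factors_conj:
  assumes "g \<in> carrier G" "x \<in> carrier G"
  shows "card (twothree_factors G (g \<otimes> x \<otimes> inv g)) = card (twothree_factors G x)"
proof -
  have "bij_betw (\<lambda>a. g \<otimes> a \<otimes> inv g) (twothree_factors G x) (twothree_factors G (g \<otimes> x \<otimes> inv g))"
  proof (rule bij_betw_byWitness[where f' = "\<lambda>b. inv g \<otimes> b \<otimes> g"])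
    have mult_conj: "(g \<otimes> x \<otimes> inv g) \<otimes> (g \<otimes> a \<otimes> inv g) = g \<otimes> (x \<otimes> a) \<otimes> inv g"
      if "a \<in> carrier G" for a
      using assms that by (simp add: m_assoc)
    show "(\<lambda>a. g \<otimes> a \<otimes> inv g) ` twothree_factors G x \<subseteq> twothree_factors G (g \<otimes> x \<otimes> inv g)"
      using assms by (auto simp: twothree_factors_def mult_conj ord_conj)
    have "inv g \<otimes> (g \<otimes> x \<otimes> inv g) \<otimes> inv (inv g) = x"
      using assms by (simp add: m_assoc)
    then have "ord (inv g \<otimes> b \<otimes> g) = 2 \<and> ord (x \<otimes> (inv g \<otimes> b \<otimes> g)) = 3"
      if "b \<in> twothree_factors G (g \<otimes> x \<otimes> inv g)" for b
      using that assms ord_conj[of "inv g" b] ord_conj[of "inv g" "(g \<otimes> x \<otimes> inv g) \<otimes> b"]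
      by (auto simp: twothree_factors_def m_assoc)
    then show "(\<lambda>b. inv g \<otimes> b \<otimes> g) ` twothree_factors G (g \<otimes> x \<otimes> inv g) \<subseteq> twothree_factors G x"
      using assms by (auto simp: twothree_factors_def)
  qed (use assms in \<open>auto simp: twothree_factors_def m_assoc\<close>)
  then show ?thesis by (simp add: bij_betw_same_card)
qed

lemma card_triples_conj_class:
  assumes "finite (carrier G)" "x \<in> carrier G" "ord x = k"
  shows "card {t \<in> triples G k. snd (snd t) \<in> conj_class G x}
           = card (conj_class G x) * card (twothree_factors G x)"
proof -
  define C where "C = conj_class G x"
  have C: "C \<subseteq> carrier G" unfolding C_def conj_class_def using assms by auto
  have ord_C: "ord c = k" if "c \<in> C" for c
    using that assms ord_conj unfolding C_def conj_class_def by auto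
  define h where "h = (\<lambda>(c, a). (a, inv a \<otimes> inv c, c))"
  have "{t \<in> triples G k. snd (snd t) \<in> C} = h ` (SIGMA c:C. twothree_factors G c)"
  proof (intro equalityI subsetI)
    fix t assume "t \<in> {t \<in> triples G k. snd (snd t) \<in> C}"
    then obtain a b c where t: "t = (a, b, c)" "a \<in> carrier G" "b \<in> carrier G" "c \<in> carrier G"
      "a \<otimes> b \<otimes> c = \<one>" "ord a = 2" "ord b = 3" "c \<in> C"
      unfolding triples_def by auto
    have "b = inv a \<otimes> (a \<otimes> b \<otimes> c) \<otimes> inv c" using t(2-4) by (simp add: m_assoc)
    then have b: "b = inv (c \<otimes> a)" using t by (simp add: inv_mult_group)
    then have "ord (c \<otimes> a) = 3" using t ord_inv[of "c \<otimes> a"] by simp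
    then show "t \<in> h ` (SIGMA c:C. twothree_factors G c)"
      using t b by (auto simp: h_def twothree_factors_def inv_mult_group intro!: image_eqI[of _ _ "(c, a)"])
  next
    fix t assume "t \<in> h ` (SIGMA c:C. twothree_factors G c)"
    then obtain c a where ca: "c \<in> C" "a \<in> twothree_factors G c" "t = (a, inv (c \<otimes> a), c)"
      using C by (auto simp: h_def twothree_factors_def inv_mult_group)
    moreover have "ord (inv (c \<otimes> a)) = 3"
      using ca C by (auto simp: twothree_factors_def)
    ultimately show "t \<in> {t \<in> triples G k. snd (snd t) \<in> C}"
      using C ord_C by (auto simp: triples_def twothree_factors_def inv_mult_group m_assoc)
  qed
  moreover have "inj_on h (SIGMA c:C. twothree_factors G c)"
    unfolding h_def by (rule inj_onI) auto
  moreover have "finite C" using C assms(1) finite_subset by blast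
  moreover have "card (twothree_factors G c) = card (twothree_factors G x)" if "c \<in> C" for c
    using that assms card_twothree_factors_conj unfolding C_def conj_class_def by auto
  ultimately show ?thesis
    unfolding C_def[symmetric]
    by (simp add: card_image card_SigmaI twothree_factors_def assms(1))
qed

end

section \<open>Integer \<open>2 \<times> 2\<close> matrices modulo \<open>p\<close>\<close>

lemma dvd_iff_dvd_of_dvd_diff: "(m::int) dvd x - y \<Longrightarrow> m dvd x \<longleftrightarrow> m dvd y"
  using dvd_add[of m "x - y" y] dvd_diff[of m x "x - y"] by auto

fun mat2_mult :: "mat2 \<Rightarrow> mat2 \<Rightarrow> mat2" where
  "mat2_mult (a, b, c, d) (e, f, g, h) = (a*e + b*g, a*f + b*h, c*e + d*g, c*f + d*h)"

fun mat2_mod :: "nat \<Rightarrow> mat2 \<Rightarrow> mat2" where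
  "mat2_mod p (a, b, c, d) = (a mod int p, b mod int p, c mod int p, d mod int p)"

fun mat2_smult :: "int \<Rightarrow> mat2 \<Rightarrow> mat2" where
  "mat2_smult l (a, b, c, d) = (l*a, l*b, l*c, l*d)"

fun mat2_det :: "mat2 \<Rightarrow> int" where
  "mat2_det (a, b, c, d) = a*d - b*c"

fun mat2_trace :: "mat2 \<Rightarrow> int" where
  "mat2_trace (a, b, c, d) = a + d"

fun mat2_adj :: "mat2 \<Rightarrow> mat2" where
  "mat2_adj (a, b, c, d) = (d, -b, -c, a)"

abbreviation mat2_one :: mat2 where
  "mat2_one \<equiv> (1, 0, 0, 1)"

fun mat2_pow :: "mat2 \<Rightarrow> nat \<Rightarrow> mat2" where
  "mat2_pow A 0 = mat2_one"
| "mat2_pow A (Suc n) = mat2_mult (mat2_pow A n) A"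

fun scalar_mod :: "nat \<Rightarrow> mat2 \<Rightarrow> bool" where
  "scalar_mod p (a, b, c, d) \<longleftrightarrow> int p dvd b \<and> int p dvd c \<and> int p dvd a - d"

lemma mmul_eq_mat2_mod: "mmul p M N = mat2_mod p (mat2_mult M N)"
  by (cases M rule: prod_cases4; cases N rule: prod_cases4) (simp add: mmul_def)

lemma msmul_eq_mat2_mod: "msmul p l M = mat2_mod p (mat2_smult l M)"
  by (cases M rule: prod_cases4) (simp add: msmul_def)

lemma mat2_mod_mult_mod: "mat2_mod p (mat2_mult (mat2_mod p M) (mat2_mod p N)) = mat2_mod p (mat2_mult M N)"
proof -
  have "((a::int) mod m * (e mod m) + b mod m * (g mod m)) mod m = (a*e + b*g) mod m" for a b e g m
    by (metis mod_add_eq mod_mult_eq)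
  then show ?thesis
    by (cases M rule: prod_cases4; cases N rule: prod_cases4) (simp only: mat2_mod.simps mat2_mult.simps)
qed

lemma mat2_mod_smult_mod: "mat2_mod p (mat2_smult l (mat2_mod p M)) = mat2_mod p (mat2_smult l M)"
  by (cases M rule: prod_cases4) (simp add: mod_mult_right_eq)

lemma mat2_mod_smult_mod_left: "mat2_mod p (mat2_smult (l mod int p) M) = mat2_mod p (mat2_smult l M)"
  by (cases M rule: prod_cases4) (simp add: mod_mult_left_eq)

lemma mat2_mod_mod [simp]: "mat2_mod p (mat2_mod p M) = mat2_mod p M"
  by (cases M rule: prod_cases4) simp

lemma mat2_mod_eqI:
  "int p dvd x1 - y1 \<Longrightarrow> int p dvd x2 - y2 \<Longrightarrow> int p dvd x3 - y3 \<Longrightarrow> int p dvd x4 - y4 \<Longrightarrow>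
   mat2_mod p (x1, x2, x3, x4) = mat2_mod p (y1, y2, y3, y4)"
  by (simp add: mod_eq_dvd_iff)

lemma mat2_mult_assoc: "mat2_mult (mat2_mult A B) C = mat2_mult A (mat2_mult B C)"
  by (cases A rule: prod_cases4; cases B rule: prod_cases4; cases C rule: prod_cases4)
     (simp add: algebra_simps)

lemma mat2_mult_smult_left: "mat2_mult (mat2_smult l A) B = mat2_smult l (mat2_mult A B)"
  by (cases A rule: prod_cases4; cases B rule: prod_cases4) (simp add: algebra_simps)

lemma mat2_mult_smult_right: "mat2_mult A (mat2_smult l B) = mat2_smult l (mat2_mult A B)"
  by (cases A rule: prod_cases4; cases B rule: prod_cases4) (simp add: algebra_simps)

lemma mat2_smult_smult: "mat2_smult l (mat2_smult m A) = mat2_smult (l*m) A"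
  by (cases A rule: prod_cases4) (simp add: algebra_simps)

lemma mat2_smult_1 [simp]: "mat2_smult 1 A = A"
  by (cases A rule: prod_cases4) simp

lemma mat2_one_mult: "mat2_mult mat2_one A = A"
  by (cases A rule: prod_cases4) simp

lemma mat2_det_mult: "mat2_det (mat2_mult A B) = mat2_det A * mat2_det B"
  by (cases A rule: prod_cases4; cases B rule: prod_cases4) (simp add: algebra_simps)

lemma mat2_det_smult: "mat2_det (mat2_smult l A) = l^2 * mat2_det A"
  by (cases A rule: prod_cases4) (simp add: algebra_simps power2_eq_square)

lemma mat2_adj_mult: "mat2_mult (mat2_adj A) A = mat2_smult (mat2_det A) mat2_one"
  by (cases A rule: prod_cases4) (simp add: algebra_simps)

lemma dvd_det_mat2_mod_iff: "int p dvd mat2_det (mat2_mod p M) \<longleftrightarrow> int p dvd mat2_det M"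
proof (cases M rule: prod_cases4)
  case (fields a b c d)
  have "((a::int) mod m * (d mod m) - b mod m * (c mod m)) mod m = (a*d - b*c) mod m" for a b c d m
    by (metis mod_diff_eq mod_mult_eq)
  then have "mat2_det (mat2_mod p M) mod int p = mat2_det M mod int p"
    using fields by (simp only: mat2_mod.simps mat2_det.simps)
  then show ?thesis by (metis dvd_eq_mod_eq_0)
qed

lemma mat2_det_pow: "mat2_det (mat2_pow A n) = mat2_det A ^ n"
  by (induction n) (simp_all add: mat2_det_mult)

lemma mat2_pow_diag: "mat2_pow (x, 0, 0, y) n = (x^n, 0, 0, y^n)"
  by (induction n) (simp_all add: mult.commute)

text \<open>The Lucas sequence \<open>U\<^sub>n(t, d)\<close>; by Cayley--Hamilton
  \<open>A\<^sup>n = U\<^sub>n A - d U\<^sub>n\<^sub>-\<^sub>1 I\<close> for \<open>t = tr A\<close> and \<open>d = det A\<close>.\<close>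

fun lucas_u :: "int \<Rightarrow> int \<Rightarrow> nat \<Rightarrow> int" where
  "lucas_u t d 0 = 0"
| "lucas_u t d (Suc 0) = 1"
| "lucas_u t d (Suc (Suc n)) = t * lucas_u t d (Suc n) - d * lucas_u t d n"

lemma mat2_pow_Suc_lucas_u:
  "mat2_pow (a, b, c, e) (Suc n) =
    (let u = lucas_u (a + e) (a*e - b*c) in
     (u (Suc n) * a - (a*e - b*c) * u n, u (Suc n) * b, u (Suc n) * c,
      u (Suc n) * e - (a*e - b*c) * u n))"
proof (induction n)
  case (Suc n)
  show ?case
    by (subst mat2_pow.simps(2), subst Suc) (simp add: Let_def algebra_simps)
qed simp

section \<open>The group \<open>PGL\<^sub>2(p)\<close> and orders of its elements\<close>

locale prime_gt_3 =
  fixes p :: nat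
  assumes prime: "prime p" and gt_3: "p > 3"
begin

lemma gt_2: "p > 2"
  using gt_3 by simp

lemma prime_int: "prime (int p)"
  using prime by simp

lemma odd: "odd p"
  using prime gt_2 prime_odd_nat by blast

lemma dvd_mult_iff: "int p dvd a * b \<longleftrightarrow> int p dvd a \<or> int p dvd b"
  using prime_int by (simp add: prime_dvd_mult_iff)

lemma not_dvd_small: "\<not> int p dvd 1" "\<not> int p dvd 2" "\<not> int p dvd 3"
  using gt_3 by (auto simp: zdvd_not_zless)

lemma not_dvd_power: "\<not> int p dvd a \<Longrightarrow> \<not> int p dvd a ^ n"
  using prime_dvd_power prime_int by blast

lemma residue_dvd_iff: "x \<in> {0..<int p} \<Longrightarrow> int p dvd x \<longleftrightarrow> x = 0"
  using zdvd_imp_le[of "int p" x] by (cases "x = 0") auto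

lemma residue_eqI: "x \<in> {0..<int p} \<Longrightarrow> y \<in> {0..<int p} \<Longrightarrow> int p dvd x - y \<Longrightarrow> x = y"
  by (metis atLeastLessThan_iff mod_eq_dvd_iff mod_pos_pos_trivial)

lemma mod_eq_residueI: "int p dvd x - y \<Longrightarrow> y \<in> {0..<int p} \<Longrightarrow> x mod int p = y"
  by (metis atLeastLessThan_iff mod_eq_dvd_iff mod_pos_pos_trivial)

lemma dvd_mod_diff: "int p dvd u mod int p - u"
  using mod_eq_dvd_iff[of "u mod int p" "int p" u] by simp

lemma mod_in_residues: "u mod int p \<in> {0..<int p}"
  using gt_2 by simp

lemma mod_in_units:
  assumes "\<not> int p dvd l" shows "l mod int p \<in> {1..<int p}"
proof -
  have "l mod int p \<noteq> 0" using assms by (simp add: dvd_eq_mod_eq_0)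
  moreover have "0 \<le> l mod int p" "l mod int p < int p" using gt_2 by simp_all
  ultimately show ?thesis by simp
qed

lemma unit_not_dvd: "l \<in> {1..<int p} \<Longrightarrow> \<not> int p dvd l"
  by (auto simp: zdvd_not_zless)

abbreviation inv_mod :: "int \<Rightarrow> int" where
  "inv_mod y \<equiv> modular_inverse (int p) y"

lemma dvd_mult_inv_mod: "\<not> int p dvd y \<Longrightarrow> int p dvd y * inv_mod y - 1"
  using cong_modular_inverse1[of y "int p"] prime_int
  by (metis cong_iff_dvd_diff coprime_commute prime_imp_coprime)

lemma not_dvd_inv_mod:
  assumes "\<not> int p dvd y" shows "\<not> int p dvd inv_mod y"
proof
  assume "int p dvd inv_mod y"
  then have "int p dvd y * inv_mod y - (y * inv_mod y - 1)"
    using dvd_diff[OF dvd_mult dvd_mult_inv_mod[OF assms]] by blast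
  then show False using not_dvd_small(1) by simp
qed

lemma fermat: "int p dvd t ^ p - t"
proof (cases "int p dvd t")
  case True
  moreover have "t dvd t ^ p" using gt_2 by (simp add: dvd_power)
  ultimately show ?thesis by (meson dvd_diff dvd_trans)
next
  case False
  define n where "n = nat (t mod int p)"
  have n: "int n = t mod int p" unfolding n_def using gt_2 by simp
  have "\<not> p dvd n"
  proof
    assume "p dvd n"
    then have "int p dvd t mod int p" using n by (metis int_dvd_int_iff)
    then show False using False by (simp add: dvd_mod_iff)
  qed
  then have "[int n ^ (p - 1) = 1] (mod int p)"
    using fermat_theorem[OF prime] by (metis cong_int_iff of_nat_1 of_nat_power)
  then have "[t ^ (p - 1) = 1] (mod int p)"
    using n by (metis cong_def cong_pow cong_trans cong_sym mod_mod_trivial)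
  then have "[t * t ^ (p - 1) = t] (mod int p)"
    using cong_scalar_left by fastforce
  moreover have "t * t ^ (p - 1) = t ^ p"
    using gt_2 by (simp flip: power_Suc)
  ultimately show ?thesis by (simp add: cong_iff_dvd_diff)
qed

lemma sclass_conv: "sclass p M = {mat2_mod p (mat2_smult l M) | l. \<not> int p dvd l}"
proof (intro equalityI subsetI)
  fix X assume "X \<in> sclass p M"
  then show "X \<in> {mat2_mod p (mat2_smult l M) | l. \<not> int p dvd l}"
    unfolding sclass_def msmul_eq_mat2_mod using unit_not_dvd by blast
next
  fix X assume "X \<in> {mat2_mod p (mat2_smult l M) | l. \<not> int p dvd l}"
  then obtain l where l: "\<not> int p dvd l" "X = mat2_mod p (mat2_smult l M)" by auto
  then have "X = msmul p (l mod int p) M"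
    by (simp add: msmul_eq_mat2_mod mat2_mod_smult_mod_left)
  then show "X \<in> sclass p M"
    using mod_in_units[OF l(1)] unfolding sclass_def by blast
qed

lemma sclass_smult:
  assumes "\<not> int p dvd s"
  shows "sclass p (mat2_smult s M) = sclass p M"
proof (intro equalityI subsetI)
  fix X assume "X \<in> sclass p (mat2_smult s M)"
  then show "X \<in> sclass p M"
    using assms by (auto simp: sclass_conv mat2_smult_smult dvd_mult_iff)
next
  fix X assume "X \<in> sclass p M"
  then obtain l where l: "\<not> int p dvd l" "X = mat2_mod p (mat2_smult l M)"
    unfolding sclass_conv by blast
  define s' where "s' = inv_mod s"
  have "int p dvd l * s' * s - l"
    using dvd_mult[OF dvd_mult_inv_mod[OF assms], of l] by (simp add: s'_def algebra_simps)
  then have "(l * s' * s) mod int p = l mod int p"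
    by (simp add: mod_eq_dvd_iff)
  then have "X = mat2_mod p (mat2_smult (l * s') (mat2_smult s M))"
    using l by (metis mat2_smult_smult mat2_mod_smult_mod_left)
  moreover have "\<not> int p dvd l * s'"
    using l not_dvd_inv_mod[OF assms] by (simp add: s'_def dvd_mult_iff)
  ultimately show "X \<in> sclass p (mat2_smult s M)"
    unfolding sclass_conv by blast
qed

lemma sclass_mat2_mod [simp]: "sclass p (mat2_mod p M) = sclass p M"
  unfolding sclass_conv by (simp add: mat2_mod_smult_mod)

lemma mat2_mod_in_sclass: "mat2_mod p M \<in> sclass p M"
proof -
  have "mat2_mod p M = mat2_mod p (mat2_smult 1 M)" by simp
  then show ?thesis unfolding sclass_conv using not_dvd_small(1) by blast
qed

lemma sclass_eq_iff:
  "sclass p M = sclass p N \<longleftrightarrow> (\<exists>l. \<not> int p dvd l \<and> mat2_mod p N = mat2_mod p (mat2_smult l M))"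
proof
  assume "sclass p M = sclass p N"
  then have "mat2_mod p N \<in> sclass p M" using mat2_mod_in_sclass by simp
  then show "\<exists>l. \<not> int p dvd l \<and> mat2_mod p N = mat2_mod p (mat2_smult l M)"
    unfolding sclass_conv by blast
next
  assume "\<exists>l. \<not> int p dvd l \<and> mat2_mod p N = mat2_mod p (mat2_smult l M)"
  then obtain l where l: "\<not> int p dvd l" "mat2_mod p N = mat2_mod p (mat2_smult l M)" by blast
  have "sclass p N = sclass p (mat2_mod p N)" by simp
  also have "\<dots> = sclass p (mat2_smult l M)" using l(2) sclass_mat2_mod by metis
  also have "\<dots> = sclass p M" using sclass_smult[OF l(1)] .
  finally show "sclass p M = sclass p N" by simp
qed

lemma mult_PGL2: "X \<otimes>\<^bsub>PGL2 p\<^esub> Y = {mmul p A B | A B. A \<in> X \<and> B \<in> Y}"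
  by (simp add: PGL2_def)

lemma mult_PGL2_sclass [simp]:
  "sclass p A \<otimes>\<^bsub>PGL2 p\<^esub> sclass p B = sclass p (mat2_mult A B)"
  unfolding mult_PGL2
proof (intro equalityI subsetI)
  fix Z assume "Z \<in> {mmul p X Y | X Y. X \<in> sclass p A \<and> Y \<in> sclass p B}"
  then obtain X Y where XY: "Z = mmul p X Y" "X \<in> sclass p A" "Y \<in> sclass p B"
    by blast
  obtain l where l: "\<not> int p dvd l" "X = mat2_mod p (mat2_smult l A)"
    using XY(2) unfolding sclass_conv by blast
  obtain m where m: "\<not> int p dvd m" "Y = mat2_mod p (mat2_smult m B)"
    using XY(3) unfolding sclass_conv by blast
  have "Z = mat2_mod p (mat2_smult (l * m) (mat2_mult A B))"
    unfolding XY(1) l(2) m(2)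
    by (simp only: mmul_eq_mat2_mod mat2_mod_mult_mod mat2_mult_smult_left mat2_mult_smult_right
        mat2_smult_smult mult.commute)
  moreover have "\<not> int p dvd l * m" using l m by (simp add: dvd_mult_iff)
  ultimately show "Z \<in> sclass p (mat2_mult A B)"
    unfolding sclass_conv by blast
next
  fix Z assume "Z \<in> sclass p (mat2_mult A B)"
  then obtain l where l: "\<not> int p dvd l" "Z = mat2_mod p (mat2_smult l (mat2_mult A B))"
    unfolding sclass_conv by blast
  then have "Z = mmul p (mat2_mod p (mat2_smult l A)) (mat2_mod p B)"
    by (simp only: mmul_eq_mat2_mod mat2_mod_mod mat2_mod_mult_mod mat2_mult_smult_left)
  moreover have "mat2_mod p (mat2_smult l A) \<in> sclass p A"
    using l unfolding sclass_conv by blast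
  ultimately show "Z \<in> {mmul p X Y | X Y. X \<in> sclass p A \<and> Y \<in> sclass p B}"
    using mat2_mod_in_sclass[of B] by blast
qed

lemma GL2_iff: "M \<in> GL2 p \<longleftrightarrow> mat2_mod p M = M \<and> \<not> int p dvd mat2_det M"
proof (cases M rule: prod_cases4)
  case (fields a b c d)
  have residue: "x \<in> {0..<int p} \<longleftrightarrow> x mod int p = x" for x
    using mod_in_residues[of x] by (auto simp: mod_pos_pos_trivial)
  have "M \<in> GL2 p \<longleftrightarrow> a \<in> {0..<int p} \<and> b \<in> {0..<int p} \<and> c \<in> {0..<int p}
      \<and> d \<in> {0..<int p} \<and> \<not> int p dvd mat2_det M"
    using fields unfolding GL2_def by (simp add: dvd_eq_mod_eq_0)
  then show ?thesis
    unfolding residue using fields by simp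
qed

lemma carrier_PGL2: "carrier (PGL2 p) = sclass p ` GL2 p"
  by (simp add: PGL2_def)

lemma one_PGL2: "\<one>\<^bsub>PGL2 p\<^esub> = sclass p mat2_one"
  by (simp add: PGL2_def)

lemma carrier_PGL2E:
  assumes "x \<in> carrier (PGL2 p)"
  obtains A where "x = sclass p A" "\<not> int p dvd mat2_det A"
proof -
  obtain A where "A \<in> GL2 p" "x = sclass p A"
    using assms unfolding carrier_PGL2 by blast
  then show thesis using that GL2_iff by blast
qed

lemma sclass_in_carrier_PGL2: "\<not> int p dvd mat2_det A \<Longrightarrow> sclass p A \<in> carrier (PGL2 p)"
proof -
  assume "\<not> int p dvd mat2_det A"
  then have "mat2_mod p A \<in> GL2 p" by (simp add: GL2_iff dvd_det_mat2_mod_iff)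
  then show ?thesis
    unfolding carrier_PGL2 using image_eqI[of "sclass p A" "sclass p" "mat2_mod p A"] by simp
qed

lemma sclass_scalar: "\<not> int p dvd s \<Longrightarrow> sclass p (s, 0, 0, s) = \<one>\<^bsub>PGL2 p\<^esub>"
  using sclass_smult[of s mat2_one] by (simp add: one_PGL2)

lemma group_PGL2: "group (PGL2 p)"
proof (rule groupI)
  fix x y assume "x \<in> carrier (PGL2 p)" "y \<in> carrier (PGL2 p)"
  then show "x \<otimes>\<^bsub>PGL2 p\<^esub> y \<in> carrier (PGL2 p)"
    by (elim carrier_PGL2E) (simp add: sclass_in_carrier_PGL2 mat2_det_mult dvd_mult_iff)
next
  show "\<one>\<^bsub>PGL2 p\<^esub> \<in> carrier (PGL2 p)"
    using sclass_in_carrier_PGL2 not_dvd_small(1) by (simp add: one_PGL2)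
next
  fix x y z assume "x \<in> carrier (PGL2 p)" "y \<in> carrier (PGL2 p)" "z \<in> carrier (PGL2 p)"
  then show "x \<otimes>\<^bsub>PGL2 p\<^esub> y \<otimes>\<^bsub>PGL2 p\<^esub> z = x \<otimes>\<^bsub>PGL2 p\<^esub> (y \<otimes>\<^bsub>PGL2 p\<^esub> z)"
    by (elim carrier_PGL2E) (simp add: mat2_mult_assoc)
next
  fix x assume "x \<in> carrier (PGL2 p)"
  then show "\<one>\<^bsub>PGL2 p\<^esub> \<otimes>\<^bsub>PGL2 p\<^esub> x = x"
    by (elim carrier_PGL2E) (simp add: one_PGL2 mat2_one_mult)
next
  fix x assume "x \<in> carrier (PGL2 p)"
  then obtain A where A: "x = sclass p A" "\<not> int p dvd mat2_det A"
    by (elim carrier_PGL2E)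
  have "sclass p (mat2_adj A) \<in> carrier (PGL2 p)"
    using A(2) by (intro sclass_in_carrier_PGL2) (cases A rule: prod_cases4, simp add: mult.commute)
  moreover have "sclass p (mat2_adj A) \<otimes>\<^bsub>PGL2 p\<^esub> x = \<one>\<^bsub>PGL2 p\<^esub>"
    using A by (simp add: mat2_adj_mult sclass_scalar)
  ultimately show "\<exists>y\<in>carrier (PGL2 p). y \<otimes>\<^bsub>PGL2 p\<^esub> x = \<one>\<^bsub>PGL2 p\<^esub>" by blast
qed

sublocale PGL2: group "PGL2 p"
  by (rule group_PGL2)

lemma pow_PGL2_sclass: "sclass p A [^]\<^bsub>PGL2 p\<^esub> (n::nat) = sclass p (mat2_pow A n)"
  by (induction n) (simp_all add: one_PGL2)

lemma sclass_eq_one_iff: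
  assumes "\<not> int p dvd mat2_det A"
  shows "sclass p A = \<one>\<^bsub>PGL2 p\<^esub> \<longleftrightarrow> scalar_mod p A"
proof (cases A rule: prod_cases4)
  case (fields a b c d)
  show ?thesis
  proof
    assume "sclass p A = \<one>\<^bsub>PGL2 p\<^esub>"
    then obtain l where "mat2_mod p A = mat2_mod p (mat2_smult l mat2_one)"
      using mat2_mod_in_sclass[of A] unfolding one_PGL2 sclass_conv by auto
    then have "a mod int p = d mod int p" "b mod int p = 0" "c mod int p = 0"
      using fields by simp_all
    then show "scalar_mod p A"
      using fields by (simp add: mod_eq_dvd_iff dvd_eq_mod_eq_0)
  next
    assume scalar: "scalar_mod p A"
    have "\<not> int p dvd a"
      using assms scalar fields by auto
    have "mat2_mod p A = mat2_mod p (a, 0, 0, a)"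
      unfolding fields
      by (rule mat2_mod_eqI) (use scalar fields in \<open>simp_all add: dvd_diff_commute[of "int p" d a]\<close>)
    then have "sclass p A = sclass p (a, 0, 0, a)"
      by (metis sclass_mat2_mod)
    then show "sclass p A = \<one>\<^bsub>PGL2 p\<^esub>"
      using sclass_scalar[OF \<open>\<not> int p dvd a\<close>] by simp
  qed
qed

lemma sclass_pow_eq_one_iff:
  assumes "\<not> int p dvd mat2_det A" "\<not> scalar_mod p A"
  shows "sclass p A [^]\<^bsub>PGL2 p\<^esub> n = \<one>\<^bsub>PGL2 p\<^esub>
           \<longleftrightarrow> int p dvd lucas_u (mat2_trace A) (mat2_det A) n"
proof (cases n)
  case (Suc m)
  obtain a b c e where A: "A = (a, b, c, e)" by (cases A rule: prod_cases4)
  let ?u = "lucas_u (a + e) (a*e - b*c) (Suc m)"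
  have "\<not> int p dvd mat2_det (mat2_pow A n)"
    using assms(1) by (simp add: mat2_det_pow not_dvd_power)
  then have "sclass p A [^]\<^bsub>PGL2 p\<^esub> n = \<one>\<^bsub>PGL2 p\<^esub> \<longleftrightarrow> scalar_mod p (mat2_pow A n)"
    by (simp add: pow_PGL2_sclass sclass_eq_one_iff)
  also have "\<dots> \<longleftrightarrow> int p dvd ?u * b \<and> int p dvd ?u * c \<and> int p dvd ?u * (a - e)"
    using A Suc by (simp del: mat2_pow.simps add: mat2_pow_Suc_lucas_u Let_def algebra_simps)
  also have "\<dots> \<longleftrightarrow> int p dvd ?u"
    using assms(2) A by (auto simp: dvd_mult_iff)
  finally show ?thesis using A Suc by simp
qed (simp add: one_PGL2)

lemma ord_sclass_eq_prime_iff: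
  assumes "\<not> int p dvd mat2_det A" "prime q"
  shows "PGL2.ord (sclass p A) = q
           \<longleftrightarrow> \<not> scalar_mod p A \<and> int p dvd lucas_u (mat2_trace A) (mat2_det A) q"
proof (cases "scalar_mod p A")
  case True
  then have "sclass p A = \<one>\<^bsub>PGL2 p\<^esub>"
    using assms(1) sclass_eq_one_iff by blast
  then have "PGL2.ord (sclass p A) = 1"
    using PGL2.ord_id by simp
  then show ?thesis
    using True assms(2) by auto
next
  case False
  then show ?thesis
    using assms sclass_pow_eq_one_iff sclass_eq_one_iff
      PGL2.ord_eq_prime_iff[OF sclass_in_carrier_PGL2] by auto
qed

lemma scalar_mod_not_dvd:
  assumes "\<not> int p dvd mat2_det A" "scalar_mod p A"
  shows "\<not> int p dvd mat2_trace A" "\<not> int p dvd mat2_trace A ^ 2 - mat2_det A"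
proof -
  obtain a b c d where A: "A = (a, b, c, d)" by (cases A rule: prod_cases4)
  have da: "int p dvd d - a" "int p dvd b" using assms(2) A by (auto simp: dvd_diff_commute)
  have a: "\<not> int p dvd a" using assms A by auto
  have "mat2_trace A = 2 * a + (d - a)"
    using A by simp
  then have "int p dvd mat2_trace A \<longleftrightarrow> int p dvd 2 * a"
    using dvd_add_left_iff[OF da(1), of "2 * a"] by simp
  then show "\<not> int p dvd mat2_trace A"
    using a not_dvd_small(2) by (simp add: dvd_mult_iff)
  have "mat2_trace A ^ 2 - mat2_det A = 3 * a^2 + ((d - a) * (d + 2*a) + b*c)"
    using A by (simp add: algebra_simps power2_eq_square)
  moreover have "int p dvd (d - a) * (d + 2*a) + b*c"
    using da by simp
  ultimately have "int p dvd mat2_trace A ^ 2 - mat2_det A \<longleftrightarrow> int p dvd 3 * a^2"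
    using dvd_add_left_iff by simp
  then show "\<not> int p dvd mat2_trace A ^ 2 - mat2_det A"
    using a not_dvd_small(3) by (simp add: dvd_mult_iff power2_eq_square)
qed

lemma ord_sclass_eq_2_iff:
  assumes "\<not> int p dvd mat2_det A"
  shows "PGL2.ord (sclass p A) = 2 \<longleftrightarrow> int p dvd mat2_trace A"
proof -
  have "lucas_u t d 2 = t" for t d by (simp add: numeral_2_eq_2)
  then show ?thesis
    using ord_sclass_eq_prime_iff[OF assms two_is_prime_nat] scalar_mod_not_dvd[OF assms] by auto
qed

lemma ord_sclass_eq_3_iff:
  assumes "\<not> int p dvd mat2_det A"
  shows "PGL2.ord (sclass p A) = 3 \<longleftrightarrow> int p dvd mat2_trace A ^ 2 - mat2_det A"
proof -
  have "lucas_u t d 3 = t^2 - d" for t d by (simp add: numeral_3_eq_3 power2_eq_square)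
  moreover have "prime (3::nat)" by simp
  ultimately show ?thesis
    using ord_sclass_eq_prime_iff[OF assms] scalar_mod_not_dvd[OF assms] by auto
qed

end

section \<open>Lucas sequences and the Frobenius of \<open>\<int>[\<surd>\<delta>]\<close>\<close>

text \<open>\<open>quad_pow t \<delta> n = (x, y)\<close> encodes \<open>(t + \<surd>\<delta>)\<^sup>n = x + y \<surd>\<delta>\<close>.\<close>

fun quad_pow :: "int \<Rightarrow> int \<Rightarrow> nat \<Rightarrow> int \<times> int" where
  "quad_pow t \<delta> 0 = (1, 0)"
| "quad_pow t \<delta> (Suc n) =
     (t * fst (quad_pow t \<delta> n) + \<delta> * snd (quad_pow t \<delta> n), fst (quad_pow t \<delta> n) + t * snd (quad_pow t \<delta> n))"

text \<open>Modulo \<open>m\<close>, with \<open>\<delta> \<equiv> t\<^sup>2 - 4d\<close>, the number \<open>(t + \<surd>\<delta>)/2\<close> is a root of \<open>X\<^sup>2 - tX + d\<close>;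
  hence \<open>2 y\<^sub>n \<equiv> 2\<^sup>n U\<^sub>n\<close>.\<close>

lemma quad_pow_lucas_u:
  assumes "m dvd \<delta> - (t^2 - 4*d)"
  shows "m dvd 2 * snd (quad_pow t \<delta> n) - 2^n * lucas_u t d n \<and>
         m dvd fst (quad_pow t \<delta> n) - 2^n * (lucas_u t d (Suc n) - t * lucas_u t d n) - t * snd (quad_pow t \<delta> n)"
proof (induction n)
  case (Suc n)
  define x where "x = fst (quad_pow t \<delta> n)"
  define y where "y = snd (quad_pow t \<delta> n)"
  define X where "X = x - 2^n * (lucas_u t d (Suc n) - t * lucas_u t d n) - t * y"
  define Y where "Y = 2 * y - 2^n * lucas_u t d n"
  have "m dvd X" "m dvd Y"
    using Suc unfolding X_def Y_def x_def y_def by auto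
  moreover have "2 * snd (quad_pow t \<delta> (Suc n)) - 2^(Suc n) * lucas_u t d (Suc n) = 2*X + 2*t*Y"
    unfolding X_def Y_def by (simp add: x_def y_def algebra_simps)
  moreover have "fst (quad_pow t \<delta> (Suc n))
      - 2^(Suc n) * (lucas_u t d (Suc (Suc n)) - t * lucas_u t d (Suc n)) - t * snd (quad_pow t \<delta> (Suc n))
      = (\<delta> - (t^2 - 4*d)) * y - 2*d*Y"
    unfolding Y_def by (simp add: x_def y_def algebra_simps power2_eq_square)
  ultimately show ?case
    using assms by simp
qed simp

definition binomial_even_part :: "int \<Rightarrow> int \<Rightarrow> nat \<Rightarrow> int" where
  "binomial_even_part t \<delta> n = (\<Sum>j\<le>n. if even j then int (n choose j) * (t^(n-j) * \<delta>^(j div 2)) else 0)"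

definition binomial_odd_part :: "int \<Rightarrow> int \<Rightarrow> nat \<Rightarrow> int" where
  "binomial_odd_part t \<delta> n = (\<Sum>j\<le>n. if odd j then int (n choose j) * (t^(n-j) * \<delta>^(j div 2)) else 0)"

lemma quad_pow_complex:
  fixes r :: complex
  assumes "r^2 = of_int \<delta>"
  shows "(of_int t + r)^n = of_int (fst (quad_pow t \<delta> n)) + of_int (snd (quad_pow t \<delta> n)) * r"
proof (induction n)
  case (Suc n)
  have "r * r = of_int \<delta>" using assms by (simp add: power2_eq_square)
  with Suc show ?case
    by (simp add: algebra_simps)
qed simp

lemma power_sqrt_complex:
  fixes r :: complex
  assumes "r^2 = of_int \<delta>"
  shows "r^k = of_int (\<delta>^(k div 2)) * (if even k then 1 else r)"
proof -
  have "r^k = r^(2 * (k div 2) + k mod 2)" by simp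
  also have "\<dots> = (r^2)^(k div 2) * r^(k mod 2)" by (simp only: power_add power_mult)
  finally have "r^k = (r^2)^(k div 2) * r^(k mod 2)" .
  then show ?thesis
    using assms by (cases "even k") (auto simp: odd_iff_mod_2_eq_one)
qed

lemma binomial_complex:
  fixes r :: complex
  assumes "r^2 = of_int \<delta>"
  shows "(of_int t + r)^n = of_int (binomial_even_part t \<delta> n) + of_int (binomial_odd_part t \<delta> n) * r"
proof -
  have "(of_int t + r)^n = (\<Sum>k\<le>n. of_nat (n choose k) * r^k * (of_int t)^(n-k))"
    by (subst add.commute) (rule binomial_ring)
  also have "\<dots> = (\<Sum>k\<le>n. of_int (if even k then int (n choose k) * (t^(n-k) * \<delta>^(k div 2)) else 0)
       + of_int (if odd k then int (n choose k) * (t^(n-k) * \<delta>^(k div 2)) else 0) * r)"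
    by (rule sum.cong) (auto simp: power_sqrt_complex[OF assms] algebra_simps)
  also have "\<dots> = of_int (binomial_even_part t \<delta> n) + of_int (binomial_odd_part t \<delta> n) * r"
    unfolding binomial_even_part_def binomial_odd_part_def by (simp add: sum.distrib sum_distrib_right)
  finally show ?thesis .
qed

text \<open>Compare \<open>(t \<plusminus> r)\<^sup>n\<close> for a complex square root \<open>r \<noteq> 0\<close> of \<open>\<delta>\<close>.\<close>

lemma quad_pow_eq_binomial:
  assumes "\<delta> \<noteq> 0"
  shows "quad_pow t \<delta> n = (binomial_even_part t \<delta> n, binomial_odd_part t \<delta> n)"
proof -
  define r where "r = csqrt (of_int \<delta>)"
  have r: "r^2 = of_int \<delta>" "(-r)^2 = of_int \<delta>" "r \<noteq> 0"
    using assms unfolding r_def by auto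
  let ?x = "of_int (fst (quad_pow t \<delta> n)) :: complex" and ?y = "of_int (snd (quad_pow t \<delta> n)) :: complex"
  let ?e = "of_int (binomial_even_part t \<delta> n) :: complex" and ?o = "of_int (binomial_odd_part t \<delta> n) :: complex"
  have plus: "?x + ?y * r = ?e + ?o * r"
    using quad_pow_complex[OF r(1)] binomial_complex[OF r(1)] by simp
  have minus: "?x + ?y * (-r) = ?e + ?o * (-r)"
    using quad_pow_complex[OF r(2)] binomial_complex[OF r(2)] by simp
  have "2 * ?x = (?x + ?y * r) + (?x + ?y * (-r))" by simp
  also have "\<dots> = (?e + ?o * r) + (?e + ?o * (-r))" using plus minus by simp
  also have "\<dots> = 2 * ?e" by simp
  finally have "2 * ?x = 2 * ?e" .
  then have "?x = ?e" by simp
  then have "?y = ?o"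
    using plus r(3) by simp
  with \<open>?x = ?e\<close> show ?thesis
    by (simp add: prod_eq_iff)
qed

context prime_gt_3
begin

lemma dvd_choose_sum:
  "int p dvd (\<Sum>j\<in>{1..<p}. if P j then int (p choose j) * f j else 0)"
proof -
  have "int p dvd int (p choose j)" if "j \<in> {1..<p}" for j
    using dvd_choose_prime[of j p] that prime by (auto simp: int_dvd_int_iff)
  then show ?thesis by (intro dvd_sum) auto
qed

lemma sum_atMost_prime: "(\<Sum>j\<le>p. f j) = f 0 + f p + (\<Sum>j\<in>{1..<p}. f j)"
proof -
  have "{..p} = insert 0 (insert p {1..<p})" using gt_2 by auto
  then show ?thesis using gt_2 by (simp add: add.assoc)
qed

lemma quad_pow_prime:
  assumes "\<delta> \<noteq> 0"
  shows "int p dvd fst (quad_pow t \<delta> p) - t" "int p dvd snd (quad_pow t \<delta> p) - \<delta>^((p-1) div 2)"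
proof -
  have "binomial_even_part t \<delta> p - t^p =
      (\<Sum>j\<in>{1..<p}. if even j then int (p choose j) * (t^(p-j) * \<delta>^(j div 2)) else 0)"
    unfolding binomial_even_part_def sum_atMost_prime using odd by simp
  then have "int p dvd binomial_even_part t \<delta> p - t^p"
    using dvd_choose_sum[of even] by (simp only:)
  then have "int p dvd (binomial_even_part t \<delta> p - t^p) + (t^p - t)"
    using fermat[of t] by (rule dvd_add)
  then show "int p dvd fst (quad_pow t \<delta> p) - t"
    using quad_pow_eq_binomial[OF assms] by simp
  have "p div 2 = (p - 1) div 2" using odd by (auto elim!: oddE)
  then have "binomial_odd_part t \<delta> p - \<delta>^((p-1) div 2) =
      (\<Sum>j\<in>{1..<p}. if odd j then int (p choose j) * (t^(p-j) * \<delta>^(j div 2)) else 0)"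
    unfolding binomial_odd_part_def sum_atMost_prime using odd by simp
  then show "int p dvd snd (quad_pow t \<delta> p) - \<delta>^((p-1) div 2)"
    using quad_pow_eq_binomial[OF assms] dvd_choose_sum[of odd] by simp
qed

lemma not_dvd_power_2: "\<not> int p dvd 2 ^ n"
  using not_dvd_power not_dvd_small(2) by blast

lemma dvd_lucas_u_iff_quad_pow:
  assumes "int p dvd \<delta> - (t^2 - 4*d)"
  shows "int p dvd lucas_u t d n \<longleftrightarrow> int p dvd snd (quad_pow t \<delta> n)"
proof -
  have "int p dvd 2 * snd (quad_pow t \<delta> n) - 2^n * lucas_u t d n"
    using quad_pow_lucas_u[OF assms] by blast
  then have "int p dvd 2 * snd (quad_pow t \<delta> n) \<longleftrightarrow> int p dvd 2^n * lucas_u t d n"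
    by (rule dvd_iff_dvd_of_dvd_diff)
  then show ?thesis
    using not_dvd_power_2 not_dvd_small(2) by (simp add: dvd_mult_iff)
qed

lemma nonzero_congruent:
  obtains \<delta> where "\<delta> \<noteq> 0" "int p dvd \<delta> - D"
proof
  have "0 \<le> D mod int p"
    using gt_2 by simp
  then show "D mod int p + int p \<noteq> 0"
    using gt_2 by linarith
  show "int p dvd D mod int p + int p - D"
    using dvd_add[OF dvd_refl dvd_mod_diff[of D]] by (simp add: algebra_simps)
qed

lemma lucas_u_prime_dvd:
  assumes "int p dvd t^2 - 4*d"
  shows "int p dvd lucas_u t d p"
proof -
  obtain \<delta> where \<delta>: "\<delta> \<noteq> 0" "int p dvd \<delta> - (t^2 - 4*d)"
    by (rule nonzero_congruent)
  then have "int p dvd \<delta>"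
    using assms dvd_iff_dvd_of_dvd_diff[OF \<delta>(2)] by blast
  moreover have "\<delta> dvd \<delta>^((p-1) div 2)"
    using gt_2 by (simp add: dvd_power)
  ultimately have "int p dvd \<delta>^((p-1) div 2)"
    by (rule dvd_trans)
  then have "int p dvd snd (quad_pow t \<delta> p)"
    using dvd_iff_dvd_of_dvd_diff[OF quad_pow_prime(2)[OF \<delta>(1), of t]] by blast
  then show ?thesis
    using dvd_lucas_u_iff_quad_pow[OF \<delta>(2)] by blast
qed

lemma lucas_u_Suc_prime_dvd:
  assumes "\<not> int p dvd t^2 - 4*d" and no_root: "\<nexists>s. int p dvd s^2 - (t^2 - 4*d)"
  shows "int p dvd lucas_u t d (Suc p)"
proof -
  obtain \<delta> where \<delta>: "\<delta> \<noteq> 0" "int p dvd \<delta> - (t^2 - 4*d)"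
    by (rule nonzero_congruent)
  have "\<not> QuadRes (int p) \<delta>"
  proof
    assume "QuadRes (int p) \<delta>"
    then obtain s where "int p dvd s^2 - \<delta>"
      unfolding QuadRes_def by (auto simp: cong_iff_dvd_diff)
    then have "int p dvd (s^2 - \<delta>) + (\<delta> - (t^2 - 4*d))"
      using \<delta>(2) by (rule dvd_add)
    then have "int p dvd s^2 - (t^2 - 4*d)"
      by (simp add: algebra_simps)
    then show False using no_root by blast
  qed
  moreover have "\<not> [\<delta> = 0] (mod int p)"
  proof
    assume "[\<delta> = 0] (mod int p)"
    then have "int p dvd \<delta>" by (simp add: cong_0_iff)
    then show False using assms(1) dvd_iff_dvd_of_dvd_diff[OF \<delta>(2)] by blast
  qed
  ultimately have "Legendre \<delta> (int p) = -1"
    unfolding Legendre_def by simp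
  then have "[-1 = \<delta>^((p-1) div 2)] (mod int p)"
    using euler_criterion[OF prime gt_2, of \<delta>] by simp
  then have "int p dvd -1 - \<delta>^((p-1) div 2)"
    by (simp add: cong_iff_dvd_diff)
  with quad_pow_prime(2)[OF \<delta>(1), of t]
  have "int p dvd (snd (quad_pow t \<delta> p) - \<delta>^((p-1) div 2)) - (-1 - \<delta>^((p-1) div 2))"
    by (rule dvd_diff)
  then have "int p dvd snd (quad_pow t \<delta> p) + 1"
    by simp
  moreover have "snd (quad_pow t \<delta> (Suc p)) =
      (fst (quad_pow t \<delta> p) - t) + t * (snd (quad_pow t \<delta> p) + 1)"
    by (simp add: algebra_simps)
  ultimately have "int p dvd snd (quad_pow t \<delta> (Suc p))"
    using dvd_add[OF quad_pow_prime(1)[OF \<delta>(1), of t] dvd_mult] by metis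
  then show ?thesis
    using dvd_lucas_u_iff_quad_pow[OF \<delta>(2)] by blast
qed

section \<open>Elements of order dividing \<open>p - 1\<close> are diagonalisable\<close>

lemma sqrt_discriminant_of_ord:
  assumes "\<not> int p dvd mat2_det A" "\<not> scalar_mod p A" "PGL2.ord (sclass p A) = k"
    and "k dvd p - 1" "2 < k"
  obtains s where "\<not> int p dvd s" "int p dvd s^2 - (mat2_trace A ^ 2 - 4 * mat2_det A)"
proof -
  let ?t = "mat2_trace A" and ?d = "mat2_det A"
  have ord: "int p dvd lucas_u ?t ?d n \<longleftrightarrow> k dvd n" for n
    using sclass_pow_eq_one_iff[OF assms(1,2)] PGL2.pow_eq_id[OF sclass_in_carrier_PGL2[OF assms(1)]]
      assms(3) by simp
  have "k \<le> p - 1"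
    using assms(4) gt_2 by (simp add: dvd_imp_le)
  have nondeg: "\<not> int p dvd ?t^2 - 4 * ?d"
  proof
    assume "int p dvd ?t^2 - 4 * ?d"
    then have "k dvd p"
      using lucas_u_prime_dvd ord by blast
    then show False
      using prime \<open>k \<le> p - 1\<close> assms(5) by (auto simp: prime_nat_iff)
  qed
  have "\<exists>s. int p dvd s^2 - (?t^2 - 4 * ?d)"
  proof (rule ccontr)
    assume "\<nexists>s. int p dvd s^2 - (?t^2 - 4 * ?d)"
    then have "k dvd Suc p"
      using lucas_u_Suc_prime_dvd[OF nondeg] ord by blast
    then have "k dvd Suc p - (p - 1)"
      using assms(4) by (simp add: dvd_diff_nat)
    moreover have "Suc p - (p - 1) = 2"
      using gt_2 by simp
    ultimately show False
      using assms(5) by (auto dest: dvd_imp_le)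
  qed
  then obtain s where s: "int p dvd s^2 - (?t^2 - 4 * ?d)"
    by blast
  moreover have "\<not> int p dvd s"
  proof
    assume "int p dvd s"
    then have "int p dvd s^2"
      by (simp add: power2_eq_square)
    then show False
      using nondeg dvd_iff_dvd_of_dvd_diff[OF s] by blast
  qed
  ultimately show thesis
    using that by blast
qed

text \<open>With \<open>h = (p + 1)/2 \<equiv> 1/2\<close>, the number \<open>h (t + \<sigma>)\<close> is a root of \<open>X\<^sup>2 - tX + d\<close>
  whenever \<open>\<sigma>\<^sup>2 \<equiv> t\<^sup>2 - 4d\<close>.\<close>

lemma char_poly_root:
  assumes "int p dvd \<sigma>^2 - (t^2 - 4*d)"
  shows "int p dvd ((int p + 1) div 2 * (t + \<sigma>))^2 - t * ((int p + 1) div 2 * (t + \<sigma>)) + d"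
proof -
  define h where "h = (int p + 1) div 2"
  define l where "l = h * (t + \<sigma>)"
  have "2 * h = int p + 1"
    unfolding h_def using odd by (auto elim!: oddE)
  have "2 * l = (2 * h) * (t + \<sigma>)"
    unfolding l_def by simp
  also have "\<dots> = (t + \<sigma>) + int p * (t + \<sigma>)"
    unfolding \<open>2 * h = int p + 1\<close> by (simp add: algebra_simps)
  finally have "2 * l = (t + \<sigma>) + int p * (t + \<sigma>)" .
  have "2^2 * (l^2 - t*l + d) = (2*l)^2 - 2*t*(2*l) + 4*d"
    by (simp add: algebra_simps power2_eq_square)
  also have "\<dots> = (\<sigma>^2 - (t^2 - 4*d)) + int p * (2*(t + \<sigma>)^2 + int p * (t + \<sigma>)^2 - 2*t*(t + \<sigma>))"
    unfolding \<open>2 * l = (t + \<sigma>) + int p * (t + \<sigma>)\<close> by (simp add: algebra_simps power2_eq_square)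
  finally have expand: "2^2 * (l^2 - t*l + d) =
      (\<sigma>^2 - (t^2 - 4*d)) + int p * (2*(t + \<sigma>)^2 + int p * (t + \<sigma>)^2 - 2*t*(t + \<sigma>))" .
  have "int p dvd 2^2 * (l^2 - t*l + d)"
    unfolding expand by (rule dvd_add[OF assms]) simp
  then have "int p dvd l^2 - t*l + d"
    using not_dvd_power_2[of 2] dvd_mult_iff by blast
  then show ?thesis
    unfolding l_def h_def .
qed

lemma char_poly_distinct_roots:
  assumes "int p dvd s^2 - (t^2 - 4*d)" "\<not> int p dvd s"
  obtains l1 l2 where "int p dvd l1^2 - t*l1 + d" "int p dvd l2^2 - t*l2 + d" "\<not> int p dvd l1 - l2"
proof
  let ?h = "(int p + 1) div 2"
  show "int p dvd (?h * (t + s))^2 - t * (?h * (t + s)) + d"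
    using char_poly_root[OF assms(1)] .
  show "int p dvd (?h * (t + - s))^2 - t * (?h * (t + - s)) + d"
    using char_poly_root[of "- s"] assms(1) by simp
  have "2 * ?h = int p + 1"
    using odd by (auto elim!: oddE)
  have "?h * (t + s) - ?h * (t + - s) = (2 * ?h) * s"
    by (simp add: algebra_simps)
  also have "\<dots> = s + int p * s"
    unfolding \<open>2 * ?h = int p + 1\<close> by (simp add: algebra_simps)
  finally have "?h * (t + s) - ?h * (t + - s) = s + int p * s" .
  then show "\<not> int p dvd ?h * (t + s) - ?h * (t + - s)"
    using assms(2) by (simp add: dvd_add_left_iff)
qed

lemma char_poly_root_not_dvd:
  assumes "\<not> int p dvd d" "int p dvd l^2 - t*l + d"
  shows "\<not> int p dvd l"
proof
  assume "int p dvd l"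
  then have "int p dvd (l^2 - t*l + d) - l * (l - t)"
    using assms(2) by (simp add: dvd_diff)
  then show False
    using assms(1) by (simp add: algebra_simps power2_eq_square)
qed

lemma mat2_diagonalize:
  assumes "\<not> int p dvd mat2_det A" "\<not> scalar_mod p A"
    and "int p dvd s^2 - (mat2_trace A ^ 2 - 4 * mat2_det A)" "\<not> int p dvd s"
  obtains P x y where "\<not> int p dvd mat2_det P" "\<not> int p dvd x" "\<not> int p dvd y" "\<not> int p dvd x - y"
    "mat2_mod p (mat2_mult A P) = mat2_mod p (mat2_mult P (x, 0, 0, y))"
proof -
  obtain a b c e where A: "A = (a, b, c, e)" by (cases A rule: prod_cases4)
  let ?t = "a + e" and ?d = "a*e - b*c"
  obtain l1 l2 where l: "int p dvd l1^2 - ?t*l1 + ?d" "int p dvd l2^2 - ?t*l2 + ?d" "\<not> int p dvd l1 - l2"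
    using char_poly_distinct_roots[of s ?t ?d] assms(3,4) A by auto
  have d: "\<not> int p dvd ?d"
    using assms(1) A by simp
  have eigen_b: "int p dvd c * b + e * (l - a) - (l - a) * l" if "int p dvd l^2 - ?t*l + ?d" for l
  proof -
    have eq: "c * b + e * (l - a) - (l - a) * l = - (l^2 - ?t*l + ?d)"
      by (simp add: algebra_simps power2_eq_square)
    show ?thesis
      unfolding eq dvd_minus_iff by (rule that)
  qed
  have eigen_c: "int p dvd a * (l - e) + b * c - (l - e) * l" if "int p dvd l^2 - ?t*l + ?d" for l
  proof -
    have eq: "a * (l - e) + b * c - (l - e) * l = - (l^2 - ?t*l + ?d)"
      by (simp add: algebra_simps power2_eq_square)
    show ?thesis
      unfolding eq dvd_minus_iff by (rule that)
  qed
  consider "\<not> int p dvd b" | "\<not> int p dvd c" | "int p dvd b" "int p dvd c"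
    by blast
  then show thesis
  proof cases
    case 1
    let ?P = "(b, b, l1 - a, l2 - a)"
    have "mat2_mod p (mat2_mult A ?P) = mat2_mod p (mat2_mult ?P (l1, 0, 0, l2))"
      unfolding A mat2_mult.simps
      by (rule mat2_mod_eqI)
        (simp add: algebra_simps, simp add: algebra_simps, use eigen_b[OF l(1)] in simp,
         use eigen_b[OF l(2)] in simp)
    moreover have "mat2_det ?P = - (b * (l1 - l2))"
      by (simp add: algebra_simps)
    ultimately show thesis
      using 1 l char_poly_root_not_dvd[OF d l(1)] char_poly_root_not_dvd[OF d l(2)]
      by (intro that[of ?P l1 l2]) (simp_all add: dvd_mult_iff)
  next
    case 2
    let ?P = "(l1 - e, l2 - e, c, c)"
    have "mat2_mod p (mat2_mult A ?P) = mat2_mod p (mat2_mult ?P (l1, 0, 0, l2))"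
      unfolding A mat2_mult.simps
      by (rule mat2_mod_eqI)
        (use eigen_c[OF l(1)] in simp, use eigen_c[OF l(2)] in simp, simp add: algebra_simps,
         simp add: algebra_simps)
    moreover have "mat2_det ?P = c * (l1 - l2)"
      by (simp add: algebra_simps)
    ultimately show thesis
      using 2 l char_poly_root_not_dvd[OF d l(1)] char_poly_root_not_dvd[OF d l(2)]
      by (intro that[of ?P l1 l2]) (simp_all add: dvd_mult_iff)
  next
    case 3
    then have "int p dvd b * c" by simp
    then have "\<not> int p dvd a" "\<not> int p dvd e"
      using d by (auto simp: dvd_diff)
    moreover have "\<not> int p dvd a - e"
      using assms(2) A 3 by simp
    moreover have "mat2_mod p (mat2_mult A mat2_one) = mat2_mod p (mat2_mult mat2_one (a, 0, 0, e))"
      unfolding A mat2_mult.simps by (rule mat2_mod_eqI) (use 3 in simp_all)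
    ultimately show thesis
      using not_dvd_small(1) by (intro that[of mat2_one a e]) simp_all
  qed
qed

lemma sclass_diag_normalize:
  assumes "\<not> int p dvd y"
  shows "sclass p (x, 0, 0, y) = sclass p (inv_mod y * x, 0, 0, 1)"
proof -
  have "sclass p (x, 0, 0, y) = sclass p (mat2_smult (inv_mod y) (x, 0, 0, y))"
    using sclass_smult[OF not_dvd_inv_mod[OF assms], of "(x, 0, 0, y)"] by simp
  also have "\<dots> = sclass p (mat2_mod p (inv_mod y * x, 0, 0, inv_mod y * y))"
    by (simp only: mat2_smult.simps mult_zero_right sclass_mat2_mod)
  also have "mat2_mod p (inv_mod y * x, 0, 0, inv_mod y * y) = mat2_mod p (inv_mod y * x, 0, 0, 1)"
    by (rule mat2_mod_eqI) (use dvd_mult_inv_mod[OF assms] in \<open>simp_all add: mult.commute\<close>)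
  finally show ?thesis
    by (simp only: sclass_mat2_mod)
qed

lemma conj_diag_of_ord:
  assumes "c \<in> carrier (PGL2 p)" "PGL2.ord c = k" "k dvd p - 1" "2 < k"
  obtains g \<mu> where "g \<in> carrier (PGL2 p)" "\<not> int p dvd \<mu>" "\<not> int p dvd \<mu> - 1"
    "c = g \<otimes>\<^bsub>PGL2 p\<^esub> sclass p (\<mu>, 0, 0, 1) \<otimes>\<^bsub>PGL2 p\<^esub> inv\<^bsub>PGL2 p\<^esub> g"
proof -
  obtain A where A: "c = sclass p A" "\<not> int p dvd mat2_det A"
    using assms(1) by (rule carrier_PGL2E)
  have "\<not> scalar_mod p A"
  proof
    assume "scalar_mod p A"
    then have "c = \<one>\<^bsub>PGL2 p\<^esub>"
      using A sclass_eq_one_iff by simp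
    then show False
      using assms(2,4) PGL2.ord_id by simp
  qed
  moreover have "PGL2.ord (sclass p A) = k"
    using A(1) assms(2) by simp
  ultimately obtain s where "\<not> int p dvd s" "int p dvd s^2 - (mat2_trace A ^ 2 - 4 * mat2_det A)"
    using sqrt_discriminant_of_ord[OF A(2) _ _ assms(3,4)] by blast
  then obtain P x y where P: "\<not> int p dvd mat2_det P" "\<not> int p dvd x" "\<not> int p dvd y"
    "\<not> int p dvd x - y" "mat2_mod p (mat2_mult A P) = mat2_mod p (mat2_mult P (x, 0, 0, y))"
    using mat2_diagonalize[OF A(2) \<open>\<not> scalar_mod p A\<close>] by blast
  define g where "g = sclass p P"
  define \<mu> where "\<mu> = inv_mod y * x"
  have g: "g \<in> carrier (PGL2 p)"
    unfolding g_def using P(1) by (rule sclass_in_carrier_PGL2)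
  have "\<not> int p dvd \<mu>"
    unfolding \<mu>_def using not_dvd_inv_mod P(2,3) by (simp add: dvd_mult_iff)
  moreover have "\<not> int p dvd \<mu> - 1"
  proof
    assume "int p dvd \<mu> - 1"
    then have "int p dvd (\<mu> - 1) - (y * inv_mod y - 1)"
      using dvd_mult_inv_mod[OF P(3)] by (rule dvd_diff)
    then have "int p dvd inv_mod y * (x - y)"
      unfolding \<mu>_def by (simp add: algebra_simps)
    then show False
      using not_dvd_inv_mod[OF P(3)] P(4) by (simp add: dvd_mult_iff)
  qed
  moreover have cg: "c \<otimes>\<^bsub>PGL2 p\<^esub> g = g \<otimes>\<^bsub>PGL2 p\<^esub> sclass p (\<mu>, 0, 0, 1)"
  proof -
    have "c \<otimes>\<^bsub>PGL2 p\<^esub> g = sclass p (mat2_mod p (mat2_mult A P))"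
      unfolding A g_def by simp
    also have "\<dots> = g \<otimes>\<^bsub>PGL2 p\<^esub> sclass p (x, 0, 0, y)"
      unfolding P(5) g_def by simp
    finally show ?thesis
      unfolding \<mu>_def using sclass_diag_normalize[OF P(3)] by simp
  qed
  moreover have "c = g \<otimes>\<^bsub>PGL2 p\<^esub> sclass p (\<mu>, 0, 0, 1) \<otimes>\<^bsub>PGL2 p\<^esub> inv\<^bsub>PGL2 p\<^esub> g"
  proof -
    have "c = c \<otimes>\<^bsub>PGL2 p\<^esub> g \<otimes>\<^bsub>PGL2 p\<^esub> inv\<^bsub>PGL2 p\<^esub> g"
      using assms(1) g by (simp add: PGL2.m_assoc)
    then show ?thesis
      unfolding cg .
  qed
  ultimately show thesis
    using that g by blast
qed

lemma diag_pow_eq_one_iff: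
  assumes "\<not> int p dvd \<mu>" "\<not> int p dvd \<mu> - 1"
  shows "sclass p (\<mu>, 0, 0, 1) [^]\<^bsub>PGL2 p\<^esub> (n::nat) = \<one>\<^bsub>PGL2 p\<^esub> \<longleftrightarrow> int p dvd \<mu>^n - 1"
proof -
  have "\<not> int p dvd mat2_det (mat2_pow (\<mu>, 0, 0, 1) n)"
    using not_dvd_power[OF assms(1)] by (simp add: mat2_pow_diag)
  then show ?thesis
    by (simp add: pow_PGL2_sclass sclass_eq_one_iff mat2_pow_diag)
qed

text \<open>Order \<open>k > 6\<close> means \<open>\<mu>\<close> is a root of neither \<open>\<mu>\<^sup>2 - 1\<close> nor \<open>\<mu>\<^sup>6 - 1\<close>.\<close>

lemma diag_not_dvd_of_ord:
  assumes "\<not> int p dvd \<mu>" "\<not> int p dvd \<mu> - 1"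
    and "PGL2.ord (sclass p (\<mu>, 0, 0, 1)) = k" "6 < k"
  shows "\<not> int p dvd \<mu> + 1" "\<not> int p dvd \<mu>^2 - \<mu> + 1"
proof -
  have ord: "int p dvd \<mu>^n - 1 \<longleftrightarrow> k dvd n" for n
    using diag_pow_eq_one_iff[OF assms(1,2), of n] PGL2.pow_eq_id assms(1,3)
      sclass_in_carrier_PGL2[of "(\<mu>, 0, 0, 1)"] by simp
  have "\<mu>^2 - 1 = (\<mu> + 1) * (\<mu> - 1)"
    by (simp add: algebra_simps power2_eq_square)
  then show "\<not> int p dvd \<mu> + 1"
    using ord[of 2] assms(4) by (auto dest: dvd_imp_le)
  have "\<mu>^6 - 1 = (\<mu>^2 - \<mu> + 1) * ((\<mu> + 1) * (\<mu>^3 - 1))"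
    by (simp add: algebra_simps power2_eq_square power3_eq_cube numeral_eq_Suc)
  then show "\<not> int p dvd \<mu>^2 - \<mu> + 1"
    using ord[of 6] assms(4) by (auto dest: dvd_imp_le)
qed

section \<open>Counting in \<open>GL\<^sub>2(p)\<close>\<close>

lemma GL2_residues:
  "(a, b, c, d) \<in> GL2 p \<Longrightarrow> a \<in> {0..<int p} \<and> b \<in> {0..<int p} \<and> c \<in> {0..<int p} \<and> d \<in> {0..<int p}"
  unfolding GL2_def by simp

lemma finite_GL2: "finite (GL2 p)"
proof -
  have "GL2 p \<subseteq> {0..<int p} \<times> {0..<int p} \<times> {0..<int p} \<times> {0..<int p}"
    unfolding GL2_def by auto
  then show ?thesis
    by (rule finite_subset) simp
qed

lemma finite_carrier_PGL2: "finite (carrier (PGL2 p))"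
  unfolding carrier_PGL2 using finite_GL2 by simp

lemma card_sclass:
  assumes "X \<in> GL2 p"
  shows "card (sclass p X) = p - 1"
proof -
  obtain a b c d where X: "X = (a, b, c, d)" by (cases X rule: prod_cases4)
  have entry: "\<exists>e\<in>{a, b, c, d}. \<not> int p dvd e"
    using assms X GL2_iff by auto
  have "inj_on (\<lambda>l. msmul p l X) {1..<int p}"
  proof (rule inj_onI)
    fix l l' assume l: "l \<in> {1..<int p}" "l' \<in> {1..<int p}" and eq: "msmul p l X = msmul p l' X"
    have "int p dvd (l - l') * e" if "e \<in> {a, b, c, d}" for e
    proof -
      have "(l * e) mod int p = (l' * e) mod int p"
        using eq that X by (auto simp: msmul_def)
      then show ?thesis by (simp add: mod_eq_dvd_iff algebra_simps)
    qed
    moreover obtain e where "e \<in> {a, b, c, d}" "\<not> int p dvd e"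
      using entry by blast
    ultimately have "int p dvd l - l'"
      using dvd_mult_iff by blast
    then show "l = l'"
      by (intro residue_eqI) (use l in auto)
  qed
  moreover have "sclass p X = (\<lambda>l. msmul p l X) ` {1..<int p}"
    unfolding sclass_def by auto
  ultimately show ?thesis
    by (simp add: card_image)
qed

lemma sclass_subset_GL2:
  assumes "X \<in> GL2 p" "Y \<in> sclass p X"
  shows "Y \<in> GL2 p" "sclass p Y = sclass p X"
proof -
  obtain l where l: "\<not> int p dvd l" "Y = mat2_mod p (mat2_smult l X)"
    using assms(2) unfolding sclass_conv by blast
  have "\<not> int p dvd mat2_det X"
    using assms(1) GL2_iff by blast
  then have "\<not> int p dvd mat2_det (mat2_smult l X)"
    using l(1) unfolding mat2_det_smult power2_eq_square by (simp only: dvd_mult_iff) simp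
  then show "Y \<in> GL2 p"
    unfolding l(2) GL2_iff by (simp add: dvd_det_mat2_mod_iff)
  show "sclass p Y = sclass p X"
    unfolding l(2) sclass_mat2_mod using sclass_smult[OF l(1)] .
qed

text \<open>Each element of \<open>PGL\<^sub>2(p)\<close> is the class of exactly \<open>p - 1\<close> matrices of \<open>GL\<^sub>2(p)\<close>.\<close>

lemma card_GL2_preimage:
  assumes "S \<subseteq> carrier (PGL2 p)"
  shows "(p - 1) * card S = card {X \<in> GL2 p. sclass p X \<in> S}"
proof -
  have S: "\<exists>X\<in>GL2 p. s = sclass p X" if "s \<in> S" for s
    using that assms carrier_PGL2 by blast
  have eq: "{X \<in> GL2 p. sclass p X \<in> S} = \<Union>S"
  proof (intro equalityI subsetI)
    fix X assume X: "X \<in> {X \<in> GL2 p. sclass p X \<in> S}"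
    then have "mat2_mod p X = X"
      using GL2_iff by blast
    then have "X \<in> sclass p X"
      using mat2_mod_in_sclass[of X] by simp
    with X show "X \<in> \<Union>S" by blast
  next
    fix Y assume "Y \<in> \<Union>S"
    then obtain s where s: "s \<in> S" "Y \<in> s" by blast
    then obtain X where "X \<in> GL2 p" "s = sclass p X"
      using S by blast
    then show "Y \<in> {X \<in> GL2 p. sclass p X \<in> S}"
      using s sclass_subset_GL2[of X Y] by simp
  qed
  have "(p - 1) * card S = card (\<Union>S)"
  proof (rule card_partition)
    show "finite S"
      using assms finite_carrier_PGL2 finite_subset by blast
    show "finite (\<Union>S)"
      unfolding eq[symmetric] using finite_GL2 by simp
    show "card s = p - 1" if "s \<in> S" for s
      using S[OF that] card_sclass by blast
    show "s1 \<inter> s2 = {}" if s12: "s1 \<in> S" "s2 \<in> S" "s1 \<noteq> s2" for s1 s2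
    proof (rule ccontr)
      assume "s1 \<inter> s2 \<noteq> {}"
      then obtain Y where "Y \<in> s1" "Y \<in> s2" by blast
      moreover obtain X1 X2 where "X1 \<in> GL2 p" "s1 = sclass p X1" "X2 \<in> GL2 p" "s2 = sclass p X2"
        using S s12(1,2) by blast
      ultimately have "s1 = sclass p Y" "s2 = sclass p Y"
        using sclass_subset_GL2(2)[of X1 Y] sclass_subset_GL2(2)[of X2 Y] by simp_all
      then show False using s12(3) by simp
    qed
  qed
  then show ?thesis
    using eq by simp
qed

definition row_multiples :: "int \<Rightarrow> int \<Rightarrow> (int \<times> int) set" where
  "row_multiples a b = {(c, d). c \<in> {0..<int p} \<and> d \<in> {0..<int p} \<and> int p dvd a*d - b*c}"

lemma row_multipleE:
  assumes "\<not> int p dvd a \<or> \<not> int p dvd b" "int p dvd a*d - b*c"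
  obtains \<tau> where "int p dvd \<tau> * a - c" "int p dvd \<tau> * b - d"
proof (cases "int p dvd a")
  case False
  define \<tau> where "\<tau> = c * inv_mod a"
  have "\<tau> * a - c = c * (a * inv_mod a - 1)"
    unfolding \<tau>_def by (simp add: algebra_simps)
  then have \<tau>a: "int p dvd \<tau> * a - c"
    using dvd_mult_inv_mod[OF False] by simp
  have "a * (\<tau> * b - d) = b * (\<tau> * a - c) - (a*d - b*c)"
    by (simp add: algebra_simps)
  then have "int p dvd a * (\<tau> * b - d)"
    using \<tau>a assms(2) by (simp add: dvd_diff)
  then show thesis
    using that \<tau>a False dvd_mult_iff by blast
next
  case True
  then have "\<not> int p dvd b"
    using assms(1) by blast
  have "int p dvd a*d - (a*d - b*c)"
    using dvd_mult2[OF True] assms(2) by (rule dvd_diff)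
  then have "int p dvd c"
    using \<open>\<not> int p dvd b\<close> by (simp add: dvd_mult_iff)
  define \<tau> where "\<tau> = d * inv_mod b"
  have "\<tau> * b - d = d * (b * inv_mod b - 1)"
    unfolding \<tau>_def by (simp add: algebra_simps)
  then have "int p dvd \<tau> * b - d"
    using dvd_mult_inv_mod[OF \<open>\<not> int p dvd b\<close>] by simp
  moreover have "int p dvd \<tau> * a - c"
    using True \<open>int p dvd c\<close> by (simp add: dvd_diff)
  ultimately show thesis
    using that by blast
qed

lemma card_row_multiples:
  assumes "a \<in> {0..<int p}" "b \<in> {0..<int p}" "(a, b) \<noteq> (0, 0)"
  shows "card (row_multiples a b) = p"
proof -
  define f where "f \<tau> = ((\<tau> * a) mod int p, (\<tau> * b) mod int p)" for \<tau>
  have ab: "\<not> int p dvd a \<or> \<not> int p dvd b"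
    using assms residue_dvd_iff by auto
  have "inj_on f {0..<int p}"
  proof (rule inj_onI)
    fix \<tau> \<tau>' assume \<tau>: "\<tau> \<in> {0..<int p}" "\<tau>' \<in> {0..<int p}" "f \<tau> = f \<tau>'"
    then have "int p dvd (\<tau> - \<tau>') * a" "int p dvd (\<tau> - \<tau>') * b"
      unfolding f_def by (auto simp: mod_eq_dvd_iff algebra_simps)
    then show "\<tau> = \<tau>'"
      using ab \<tau> residue_eqI dvd_mult_iff by blast
  qed
  moreover have "f ` {0..<int p} = row_multiples a b"
  proof (intro equalityI subsetI)
    fix z assume "z \<in> f ` {0..<int p}"
    then obtain \<tau> where z: "z = f \<tau>" by blast
    have "int p dvd a * ((\<tau>*b) mod int p - \<tau>*b) - b * ((\<tau>*a) mod int p - \<tau>*a)"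
      using dvd_mod_diff by (simp add: dvd_diff)
    then show "z \<in> row_multiples a b"
      unfolding z f_def row_multiples_def using mod_in_residues by (simp add: algebra_simps)
  next
    fix z assume "z \<in> row_multiples a b"
    then obtain c d where z: "z = (c, d)" "c \<in> {0..<int p}" "d \<in> {0..<int p}" "int p dvd a*d - b*c"
      unfolding row_multiples_def by blast
    obtain \<tau> where "int p dvd \<tau> * a - c" "int p dvd \<tau> * b - d"
      using ab z(4) by (rule row_multipleE)
    then have "f (\<tau> mod int p) = z"
      unfolding f_def z using z(2,3) mod_eq_residueI
      by (simp add: mod_mult_left_eq)
    then show "z \<in> f ` {0..<int p}"
      using mod_in_residues by blast
  qed
  ultimately show ?thesis
    using card_image by fastforce
qed

lemma card_GL2: "card (GL2 p) = (p*p - 1) * (p*p - p)"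
proof -
  let ?R = "{0..<int p}"
  define K where "K x = ?R \<times> ?R - row_multiples (fst x) (snd x)" for x :: "int \<times> int"
  define g where "g = (\<lambda>((a::int, b::int), (c::int, d::int)). (a, b, c, d))"
  have "GL2 p = g ` (SIGMA x:?R \<times> ?R. K x)"
    unfolding GL2_def K_def row_multiples_def g_def by (auto simp: dvd_eq_mod_eq_0 image_iff)
  moreover have "inj_on g (SIGMA x:?R \<times> ?R. K x)"
    unfolding g_def by (rule inj_onI) auto
  moreover have "card (K x) = (if x = (0, 0) then 0 else p*p - p)" if "x \<in> ?R \<times> ?R" for x
  proof (cases "x = (0, 0)")
    case True
    then show ?thesis unfolding K_def row_multiples_def by auto
  next
    case False
    have "row_multiples (fst x) (snd x) \<subseteq> ?R \<times> ?R"
      unfolding row_multiples_def by auto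
    then show ?thesis
      unfolding K_def using card_row_multiples[of "fst x" "snd x"] that False
      by (auto simp: card_Diff_subset finite_subset card_cartesian_product)
  qed
  ultimately have "card (GL2 p) = (\<Sum>x\<in>?R \<times> ?R. if x = (0, 0) then 0 else p*p - p)"
    by (simp add: card_image card_SigmaI K_def)
  also have "\<dots> = (\<Sum>x\<in>(?R \<times> ?R) - {(0, 0)}. p*p - p)"
    by (rule sum.mono_neutral_cong_right) auto
  also have "\<dots> = (p*p - 1) * (p*p - p)"
    using gt_2 by (simp add: card_cartesian_product)
  finally show ?thesis .
qed

lemma card_carrier_PGL2: "card (carrier (PGL2 p)) = p * (p*p - 1)"
proof -
  have "{X \<in> GL2 p. sclass p X \<in> carrier (PGL2 p)} = GL2 p"
    using carrier_PGL2 by auto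
  then have "(p - 1) * card (carrier (PGL2 p)) = card (GL2 p)"
    using card_GL2_preimage[of "carrier (PGL2 p)"] by simp
  also have "\<dots> = (p - 1) * (p * (p*p - 1))"
    unfolding card_GL2 by (simp add: algebra_simps diff_mult_distrib2)
  finally show ?thesis
    using gt_2 by simp
qed

lemma diag_commute_congruences:
  assumes "\<not> int p dvd \<mu> - 1" "\<not> int p dvd \<mu> + 1" "\<not> int p dvd a*e - b*c"
    and a: "int p dvd \<mu>*a - l*(a*\<mu>)" and b: "int p dvd \<mu>*b - l*b"
    and c: "int p dvd c - l*(c*\<mu>)" and e: "int p dvd e - l*e"
  shows "int p dvd b" "int p dvd c"
proof -
  have "int p dvd b \<and> int p dvd c"
  proof (cases "int p dvd l - 1")
    case True
    have "(\<mu> - 1) * b = (\<mu>*b - l*b) + (l - 1) * b"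
      by (simp add: algebra_simps)
    then have "int p dvd (\<mu> - 1) * b"
      using b True by simp
    moreover have "int p dvd (c - l*(c*\<mu>)) + (l - 1) * (c*\<mu>)"
      by (rule dvd_add[OF c dvd_mult2[OF True]])
    then have "int p dvd (1 - \<mu>) * c"
      by (simp add: algebra_simps)
    moreover have "\<not> int p dvd 1 - \<mu>"
      using assms(1) by (simp add: dvd_diff_commute)
    ultimately show ?thesis
      using assms(1) dvd_mult_iff by blast
  next
    case False
    txt \<open>Then \<open>a \<equiv> e \<equiv> 0\<close>, so \<open>b, c\<close> are units, \<open>l \<equiv> \<mu>\<close> and \<open>l\<mu> \<equiv> 1\<close>: \<open>\<mu>\<^sup>2 \<equiv> 1\<close>.\<close>
    have "\<mu>*a - l*(a*\<mu>) = - ((l - 1) * (\<mu> * a))" "e - l*e = - ((l - 1) * e)"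
      by (simp_all add: algebra_simps)
    then have "int p dvd a * e"
      using a e False by (simp add: dvd_mult_iff)
    then have "\<not> int p dvd b" "\<not> int p dvd c"
      using assms(3) by (auto simp: dvd_diff)
    moreover have "\<mu>*b - l*b = (\<mu> - l) * b" "c - l*(c*\<mu>) = (1 - l*\<mu>) * c"
      by (simp_all add: algebra_simps)
    ultimately have "int p dvd \<mu> - l" "int p dvd 1 - l*\<mu>"
      using b c by (simp_all add: dvd_mult_iff)
    then have "int p dvd (1 - l*\<mu>) - \<mu> * (\<mu> - l)"
      by (simp add: dvd_diff)
    moreover have "(1 - l*\<mu>) - \<mu> * (\<mu> - l) = - ((\<mu> - 1) * (\<mu> + 1))"
      by (simp add: algebra_simps)
    ultimately show ?thesis
      using assms(1,2) by (simp add: dvd_mult_iff)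
  qed
  then show "int p dvd b" "int p dvd c" by simp_all
qed

lemma sclass_commute_diag_iff:
  assumes "\<not> int p dvd \<mu> - 1" "\<not> int p dvd \<mu> + 1" and X: "(a, b, c, e) \<in> GL2 p"
  shows "sclass p (a, b, c, e) \<otimes>\<^bsub>PGL2 p\<^esub> sclass p (\<mu>, 0, 0, 1)
           = sclass p (\<mu>, 0, 0, 1) \<otimes>\<^bsub>PGL2 p\<^esub> sclass p (a, b, c, e) \<longleftrightarrow> b = 0 \<and> c = 0"
proof
  assume "sclass p (a, b, c, e) \<otimes>\<^bsub>PGL2 p\<^esub> sclass p (\<mu>, 0, 0, 1)
           = sclass p (\<mu>, 0, 0, 1) \<otimes>\<^bsub>PGL2 p\<^esub> sclass p (a, b, c, e)"
  then have "sclass p (a*\<mu>, b, c*\<mu>, e) = sclass p (\<mu>*a, \<mu>*b, c, e)"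
    by simp
  then obtain l where "mat2_mod p (\<mu>*a, \<mu>*b, c, e) = mat2_mod p (mat2_smult l (a*\<mu>, b, c*\<mu>, e))"
    unfolding sclass_eq_iff by blast
  then have "int p dvd \<mu>*a - l*(a*\<mu>)" "int p dvd \<mu>*b - l*b" "int p dvd c - l*(c*\<mu>)" "int p dvd e - l*e"
    by (simp_all add: mod_eq_dvd_iff)
  moreover have "\<not> int p dvd a*e - b*c"
    using X GL2_iff by simp
  ultimately have "int p dvd b" "int p dvd c"
    using diag_commute_congruences assms(1,2) by blast+
  then show "b = 0 \<and> c = 0"
    using GL2_residues[OF X] residue_dvd_iff by blast
next
  assume "b = 0 \<and> c = 0"
  then show "sclass p (a, b, c, e) \<otimes>\<^bsub>PGL2 p\<^esub> sclass p (\<mu>, 0, 0, 1)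
           = sclass p (\<mu>, 0, 0, 1) \<otimes>\<^bsub>PGL2 p\<^esub> sclass p (a, b, c, e)"
    by (simp add: mult.commute)
qed

definition diagonal_GL2 :: "mat2 set" where
  "diagonal_GL2 = (\<lambda>(a, e). (a, 0, 0, e)) ` ({1..<int p} \<times> {1..<int p})"

lemma card_diagonal_GL2: "card diagonal_GL2 = (p - 1) * (p - 1)"
proof -
  have "inj_on (\<lambda>(a, e). (a, 0, 0, e) :: mat2) ({1..<int p} \<times> {1..<int p})"
    by (rule inj_onI) auto
  then have "card diagonal_GL2 = card {1..<int p} * card {1..<int p}"
    unfolding diagonal_GL2_def by (simp add: card_image card_cartesian_product)
  also have "card {1..<int p} = p - 1"
    using gt_2 by simp
  finally show ?thesis .
qed

lemma card_centralizer_diag: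
  assumes "\<not> int p dvd \<mu>" "\<not> int p dvd \<mu> - 1" "\<not> int p dvd \<mu> + 1"
  shows "card {g \<in> carrier (PGL2 p). g \<otimes>\<^bsub>PGL2 p\<^esub> sclass p (\<mu>, 0, 0, 1) \<otimes>\<^bsub>PGL2 p\<^esub> inv\<^bsub>PGL2 p\<^esub> g
            = sclass p (\<mu>, 0, 0, 1)} = p - 1"
    (is "card ?S = _")
proof -
  have D: "sclass p (\<mu>, 0, 0, 1) \<in> carrier (PGL2 p)"
    using assms(1) by (simp add: sclass_in_carrier_PGL2)
  have "{X \<in> GL2 p. sclass p X \<in> ?S} = diagonal_GL2"
  proof (intro equalityI subsetI)
    fix X assume X: "X \<in> {X \<in> GL2 p. sclass p X \<in> ?S}"
    obtain a b c e where Xe: "X = (a, b, c, e)" by (cases X rule: prod_cases4)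
    have XG: "(a, b, c, e) \<in> GL2 p"
      and inS: "sclass p X \<in> carrier (PGL2 p)"
        "sclass p X \<otimes>\<^bsub>PGL2 p\<^esub> sclass p (\<mu>, 0, 0, 1) \<otimes>\<^bsub>PGL2 p\<^esub> inv\<^bsub>PGL2 p\<^esub> sclass p X
           = sclass p (\<mu>, 0, 0, 1)"
      using X unfolding Xe by blast+
    then have "sclass p X \<otimes>\<^bsub>PGL2 p\<^esub> sclass p (\<mu>, 0, 0, 1) = sclass p (\<mu>, 0, 0, 1) \<otimes>\<^bsub>PGL2 p\<^esub> sclass p X"
      using PGL2.conj_eq_iff_commute[OF inS(1) D] by blast
    then have "b = 0 \<and> c = 0"
      unfolding Xe by (rule sclass_commute_diag_iff[OF assms(2,3) XG, THEN iffD1])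
    moreover have "a \<in> {0..<int p}" "e \<in> {0..<int p}"
      using GL2_residues[OF XG] by simp_all
    moreover have "\<not> int p dvd a * e - b * c"
      using XG GL2_iff by auto
    ultimately have "a \<in> {1..<int p}" "e \<in> {1..<int p}"
      using residue_dvd_iff[of a] residue_dvd_iff[of e] by (auto simp: dvd_mult_iff)
    then show "X \<in> diagonal_GL2"
      unfolding Xe diagonal_GL2_def using \<open>b = 0 \<and> c = 0\<close> by force
  next
    fix X assume "X \<in> diagonal_GL2"
    then obtain a e where X: "X = (a, 0, 0, e)" "a \<in> {1..<int p}" "e \<in> {1..<int p}"
      unfolding diagonal_GL2_def by auto
    have "\<not> int p dvd a * e"
      using unit_not_dvd[OF X(2)] unit_not_dvd[OF X(3)] by (simp add: dvd_mult_iff)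
    then have XG: "X \<in> GL2 p"
      unfolding X(1) GL2_def using X(2,3) by (simp add: dvd_eq_mod_eq_0)
    then have inC: "sclass p X \<in> carrier (PGL2 p)"
      using carrier_PGL2 by simp
    have "sclass p X \<otimes>\<^bsub>PGL2 p\<^esub> sclass p (\<mu>, 0, 0, 1) = sclass p (\<mu>, 0, 0, 1) \<otimes>\<^bsub>PGL2 p\<^esub> sclass p X"
      unfolding X(1) by (simp add: mult.commute)
    then show "X \<in> {X \<in> GL2 p. sclass p X \<in> ?S}"
      using XG inC PGL2.conj_eq_iff_commute[OF inC D] by blast
  qed
  then have "(p - 1) * card ?S = (p - 1) * (p - 1)"
    using card_GL2_preimage[of ?S] card_diagonal_GL2 by simp
  then show ?thesis
    using gt_2 by simp
qed

text \<open>For \<open>D = diag(\<mu>, 1)\<close> and \<open>r \<equiv> -(\<mu>\<^sup>2 - \<mu> + 1)/\<mu>\<close>: \<open>X\<close> has order 2 iff \<open>tr X \<equiv> 0\<close>, and then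
  \<open>DX\<close> has order 3 iff \<open>(tr DX)\<^sup>2 \<equiv> det DX\<close>, which reduces to \<open>yz \<equiv> r x\<^sup>2\<close>.\<close>

lemma twothree_factors_diag_iff:
  assumes "\<not> int p dvd \<mu>" and r: "int p dvd \<mu> * r + (\<mu>^2 - \<mu> + 1)" and X: "(x, y, z, w) \<in> GL2 p"
  shows "sclass p (x, y, z, w) \<in> twothree_factors (PGL2 p) (sclass p (\<mu>, 0, 0, 1))
           \<longleftrightarrow> int p dvd x + w \<and> int p dvd y*z - r*x^2"
proof -
  have det: "\<not> int p dvd mat2_det (x, y, z, w)"
    using X GL2_iff by blast
  then have det_D: "\<not> int p dvd mat2_det (mat2_mult (\<mu>, 0, 0, 1) (x, y, z, w))"
    using assms(1) by (simp only: mat2_det_mult dvd_mult_iff) simp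
  have "sclass p (x, y, z, w) \<in> twothree_factors (PGL2 p) (sclass p (\<mu>, 0, 0, 1))
      \<longleftrightarrow> int p dvd x + w \<and> int p dvd (\<mu>*x + w)^2 - (\<mu>*x*w - \<mu>*y*z)"
    using ord_sclass_eq_2_iff[OF det] ord_sclass_eq_3_iff[OF det_D] sclass_in_carrier_PGL2[OF det]
    by (simp add: twothree_factors_def algebra_simps)
  also have "\<dots> \<longleftrightarrow> int p dvd x + w \<and> int p dvd y*z - r*x^2"
  proof (cases "int p dvd x + w")
    case True
    have "(\<mu>*x + w)^2 - (\<mu>*x*w - \<mu>*y*z) =
        \<mu> * (y*z - r*x^2) + (x^2 * (\<mu> * r + (\<mu>^2 - \<mu> + 1)) + (x + w) * ((\<mu> - 1) * x + w))"
      by (simp add: algebra_simps power2_eq_square)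
    moreover have "int p dvd x^2 * (\<mu> * r + (\<mu>^2 - \<mu> + 1)) + (x + w) * ((\<mu> - 1) * x + w)"
      using r True by simp
    ultimately have "int p dvd (\<mu>*x + w)^2 - (\<mu>*x*w - \<mu>*y*z) \<longleftrightarrow> int p dvd \<mu> * (y*z - r*x^2)"
      by (simp add: dvd_add_left_iff)
    then show ?thesis
      using True assms(1) by (simp add: dvd_mult_iff)
  qed simp
  finally show ?thesis .
qed

lemma det_dvd_iff_twothree:
  assumes "int p dvd x + w" "int p dvd y*z - r*x^2"
  shows "int p dvd x*w - y*z \<longleftrightarrow> int p dvd x^2 * (1 + r)"
proof -
  have eq: "(x*w - y*z) - (- (x^2 * (1 + r))) = x * (x + w) - (y*z - r*x^2)"
    by (simp add: algebra_simps power2_eq_square)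
  have "int p dvd (x*w - y*z) - (- (x^2 * (1 + r)))"
    unfolding eq by (rule dvd_diff[OF dvd_mult[OF assms(1)] assms(2)])
  then have "int p dvd x*w - y*z \<longleftrightarrow> int p dvd - (x^2 * (1 + r))"
    by (rule dvd_iff_dvd_of_dvd_diff)
  then show ?thesis
    by simp
qed

lemma twothree_factors_diag_preimage:
  assumes "\<not> int p dvd \<mu>" and r: "int p dvd \<mu> * r + (\<mu>^2 - \<mu> + 1)"
    and "\<not> int p dvd r" "\<not> int p dvd 1 + r"
  shows "{X \<in> GL2 p. sclass p X \<in> twothree_factors (PGL2 p) (sclass p (\<mu>, 0, 0, 1))}
           = (\<lambda>(x, y). (x, y, (r * x^2 * inv_mod y) mod int p, (- x) mod int p)) ` ({1..<int p} \<times> {1..<int p})"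
    (is "?A = ?\<phi> ` ?U")
proof (intro equalityI subsetI)
  fix X assume "X \<in> ?A"
  then obtain x y z w where X: "X = (x, y, z, w)" "(x, y, z, w) \<in> GL2 p"
    and c: "int p dvd x + w" "int p dvd y*z - r*x^2"
    using twothree_factors_diag_iff[OF assms(1) r] by (cases X rule: prod_cases4) auto
  have R: "x \<in> {0..<int p}" "y \<in> {0..<int p}" "z \<in> {0..<int p}" "w \<in> {0..<int p}"
    using GL2_residues[OF X(2)] by simp_all
  have det: "\<not> int p dvd x*w - y*z"
    using X(2) GL2_iff by auto
  have "\<not> int p dvd x"
  proof
    assume "int p dvd x"
    then have "int p dvd x^2 * (1 + r)"
      by (simp add: power2_eq_square)
    then show False
      using det det_dvd_iff_twothree[OF c] by simp
  qed
  have "\<not> int p dvd y"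
  proof
    assume "int p dvd y"
    then have "int p dvd r*x^2"
      using dvd_iff_dvd_of_dvd_diff[OF c(2)] by simp
    then show False
      using assms(3) \<open>\<not> int p dvd x\<close> by (simp add: dvd_mult_iff power2_eq_square)
  qed
  have "r*x^2*inv_mod y - z = z * (y * inv_mod y - 1) - inv_mod y * (y*z - r*x^2)"
    by (simp add: algebra_simps)
  then have "int p dvd r*x^2*inv_mod y - z"
    using c(2) dvd_mult_inv_mod[OF \<open>\<not> int p dvd y\<close>] by (simp add: dvd_diff)
  moreover have "int p dvd (- x) - w"
    using c(1) by (simp add: dvd_diff_commute[of _ "- x"] algebra_simps)
  ultimately have "X = ?\<phi> (x, y)"
    using X(1) R mod_eq_residueI by simp
  moreover have "(x, y) \<in> ?U"
    using R \<open>\<not> int p dvd x\<close> \<open>\<not> int p dvd y\<close> residue_dvd_iff by force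
  ultimately show "X \<in> ?\<phi> ` ?U"
    by blast
next
  fix X assume "X \<in> ?\<phi> ` ?U"
  then obtain x y where xy: "x \<in> {1..<int p}" "y \<in> {1..<int p}" "X = ?\<phi> (x, y)"
    by blast
  define z where "z = (r * x^2 * inv_mod y) mod int p"
  define w where "w = (- x) mod int p"
  have X: "X = (x, y, z, w)"
    using xy(3) unfolding z_def w_def by simp
  have x: "\<not> int p dvd x" and y: "\<not> int p dvd y"
    using xy(1,2) unit_not_dvd by auto
  have c1: "int p dvd x + w"
    using dvd_mod_diff[of "- x"] unfolding w_def by (simp add: algebra_simps)
  have "y*z - r*x^2 = y * (z - r*x^2*inv_mod y) + r*x^2 * (y * inv_mod y - 1)"
    by (simp add: algebra_simps)
  then have c2: "int p dvd y*z - r*x^2"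
    using dvd_mod_diff[of "r * x^2 * inv_mod y"] dvd_mult_inv_mod[OF y] unfolding z_def
    by (simp add: dvd_add)
  have "\<not> int p dvd x^2 * (1 + r)"
    using x assms(4) by (simp add: dvd_mult_iff power2_eq_square)
  then have "\<not> int p dvd x*w - y*z"
    using det_dvd_iff_twothree[OF c1 c2] by simp
  moreover have "x mod int p = x" "y mod int p = y"
    using xy(1,2) by simp_all
  ultimately have "X \<in> GL2 p"
    unfolding X GL2_iff z_def w_def by simp
  then show "X \<in> ?A"
    using twothree_factors_diag_iff[OF assms(1) r] c1 c2 unfolding X by simp
qed

lemma card_twothree_factors_diag:
  assumes "\<not> int p dvd \<mu>" "\<not> int p dvd \<mu> - 1" "\<not> int p dvd \<mu>^2 - \<mu> + 1"
  shows "card (twothree_factors (PGL2 p) (sclass p (\<mu>, 0, 0, 1))) = p - 1"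
proof -
  define r where "r = - (\<mu>^2 - \<mu> + 1) * inv_mod \<mu>"
  have "\<mu> * r + (\<mu>^2 - \<mu> + 1) = - (\<mu>^2 - \<mu> + 1) * (\<mu> * inv_mod \<mu> - 1)"
    unfolding r_def by (simp add: algebra_simps)
  then have r: "int p dvd \<mu> * r + (\<mu>^2 - \<mu> + 1)"
    using dvd_mult_inv_mod[OF assms(1)] by simp
  have "\<not> int p dvd r"
  proof
    assume "int p dvd r"
    then have "int p dvd (\<mu> * r + (\<mu>^2 - \<mu> + 1)) - \<mu> * r"
      by (rule dvd_diff[OF r dvd_mult])
    then show False
      using assms(3) by simp
  qed
  moreover have "\<not> int p dvd 1 + r"
  proof
    assume "int p dvd 1 + r"
    then have "int p dvd \<mu> * (1 + r) - (\<mu> * r + (\<mu>^2 - \<mu> + 1))"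
      using r by (simp add: dvd_diff)
    moreover have "\<mu> * (1 + r) - (\<mu> * r + (\<mu>^2 - \<mu> + 1)) = - ((\<mu> - 1) * (\<mu> - 1))"
      by (simp add: algebra_simps power2_eq_square)
    ultimately show False
      using assms(2) by (simp add: dvd_mult_iff)
  qed
  ultimately have "{X \<in> GL2 p. sclass p X \<in> twothree_factors (PGL2 p) (sclass p (\<mu>, 0, 0, 1))}
      = (\<lambda>(x, y). (x, y, (r * x^2 * inv_mod y) mod int p, (- x) mod int p)) ` ({1..<int p} \<times> {1..<int p})"
    using twothree_factors_diag_preimage[OF assms(1) r] by blast
  moreover have "inj_on (\<lambda>(x, y). (x, y, (r * x^2 * inv_mod y) mod int p, (- x) mod int p))
      ({1..<int p} \<times> {1..<int p})"
    by (rule inj_onI) auto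
  moreover have "card {1..<int p} = p - 1"
    using gt_2 by simp
  ultimately have "(p - 1) * card (twothree_factors (PGL2 p) (sclass p (\<mu>, 0, 0, 1))) = (p - 1) * (p - 1)"
    using card_GL2_preimage[of "twothree_factors (PGL2 p) (sclass p (\<mu>, 0, 0, 1))"]
    by (simp add: twothree_factors_def card_image card_cartesian_product)
  then show ?thesis
    using gt_2 by simp
qed

end

theorem lemma2:
  fixes p k :: nat and C :: "mat2 set set"
  assumes "prime p" and "p mod 24 = 19"
    and "k dvd p - 1" and "k > 10" and "odd ((p - 1) div k)"
    and "\<exists>c \<in> carrier (PGL2 p). group.ord (PGL2 p) c = k \<and> C = conj_class (PGL2 p) c"
  shows "card {t \<in> triples (PGL2 p) k. snd (snd t) \<in> C} = p * (p^2 - 1)"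
proof -
  have "p \<ge> 19"
    using assms(2) mod_less_eq_dividend[of p 24] by simp
  then interpret prime_gt_3 p
    using assms(1) by unfold_locales simp_all
  obtain c where c: "c \<in> carrier (PGL2 p)" "PGL2.ord c = k" "C = conj_class (PGL2 p) c"
    using assms(6) by blast
  obtain g \<mu> where g: "g \<in> carrier (PGL2 p)" and \<mu>: "\<not> int p dvd \<mu>" "\<not> int p dvd \<mu> - 1"
    and c_conj: "c = g \<otimes>\<^bsub>PGL2 p\<^esub> sclass p (\<mu>, 0, 0, 1) \<otimes>\<^bsub>PGL2 p\<^esub> inv\<^bsub>PGL2 p\<^esub> g"
    using conj_diag_of_ord[OF c(1,2) assms(3)] assms(4) by auto
  let ?D = "sclass p (\<mu>, 0, 0, 1)"
  have D: "?D \<in> carrier (PGL2 p)"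
    using \<mu>(1) by (simp add: sclass_in_carrier_PGL2)
  have ord_D: "PGL2.ord ?D = k"
    using PGL2.ord_conj[OF g D] c(2) c_conj by simp
  have C: "C = conj_class (PGL2 p) ?D"
    using c(3) c_conj PGL2.conj_class_conj[OF g D] by simp
  have \<mu>': "\<not> int p dvd \<mu> + 1" "\<not> int p dvd \<mu>^2 - \<mu> + 1"
    using diag_not_dvd_of_ord[OF \<mu> ord_D] assms(4) by simp_all
  have "card (conj_class (PGL2 p) ?D) * (p - 1) = (p + 1) * p * (p - 1)"
    using PGL2.card_conj_class_mult_centralizer[OF D] card_centralizer_diag[OF \<mu> \<mu>'(1)]
      card_carrier_PGL2 by (simp add: order_def algebra_simps diff_mult_distrib2)
  then have "card (conj_class (PGL2 p) ?D) = (p + 1) * p"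
    using gt_2 by simp
  then show ?thesis
    unfolding C PGL2.card_triples_conj_class[OF finite_carrier_PGL2 D ord_D]
      card_twothree_factors_diag[OF \<mu> \<mu>'(2)]
    by (simp add: power2_eq_square algebra_simps diff_mult_distrib2)
qed

end
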